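(* Let $\mathbb{K}$ be a field, $m<n$, and let $A\in\mathbb{K}[x]^{m\times n}$ have full rank $m$. Let $S\subseteq\mathbb{K}$ be finite of cardinality $q$, and let $L\in\mathbb{K}^{(n-m)\times n}$ have entries chosen independently and uniformly at random from $S$. Then $x^{\deg(A)+1}L$ is a completion of $A$ with probability at least $\prod_{i=1}^{n-m}(1-q^{-i})$ if $\mathbb{K}$ is finite and $S=\mathbb{K}$, and with probability at least $1-\frac{n-m}{q}$ in general.
   Context: For a row vector $p=[p_1,\dots,p_n]\in\mathbb{K}[x]^{1\times n}$, $\deg(p)=\max_j \deg(p_j)$. For a matrix $M$, $\mathrm{rdeg}(M)$ is the tuple of degrees of its rows and $\deg(M)$ the maximum degree of its entries. If $M\in\mathbb{K}[x]^{k\times n}$ has no zero row, its leading matrix $\mathrm{lm}(M)\in\mathbb{K}^{k\times n}$ has $(i,j)$ entry equal to the coefficient of degree $\deg(\text{row } i)$ of $M_{i,j}$. A matrix $R\in\mathbb{K}[x]^{k\times n}$ with $k\le n$ is (row) reduced if it has no zero row and $\mathrm{lm}(R)$ has full rank $k$. The pivot index of a nonzero row vector $p$ is the largest $j$ with $\deg(p_j)=\deg(p)$, and $p_j$ is its pivot entry. A matrix $P\in\mathbb{K}[x]^{k\times n}$ is in Popov form if it has no zero row, the pivot indices of its rows are strictly increasing, its pivot entries are monic, and in each column containing a pivot entry all other entries have degree strictly less than that pivot entry. The Popov form of a matrix $A$ of rank $r$ is the unique matrix in $\mathbb{K}[x]^{r\times n}$ in Popov form whose rows generate the same $\mathbb{K}[x]$-module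 as the rows of $A$. For $A\in\mathbb{K}[x]^{m\times n}$ of full rank $m<n$ with Popov form $P$, a completion of $A$ is any $C\in\mathbb{K}[x]^{(n-m)\times n}$ such that $\min(\mathrm{rdeg}(C))>\deg(P)$ and $\begin{bmatrix} P\\ C\end{bmatrix}$ is row reduced. *)

theory Defs
  imports "HOL-Computational_Algebra.Polynomial" "Jordan_Normal_Form.Matrix"
begin

text \<open>Polynomial matrices over a field are represented as \<open>'a poly mat\<close>.
  Zero polynomials have degree "minus infinity" in the paper; we treat them
  explicitly wherever this matters.\<close>

definition row_deg :: "'a::zero poly mat \<Rightarrow> nat \<Rightarrow> nat" where
  "row_deg M i = Max ({degree (M $$ (i, j)) | j. j < dim_col M} \<union> {0})"

definition mat_deg :: "'a::zero poly mat \<Rightarrow> nat" where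
  "mat_deg M = Max ({degree (M $$ (i, j)) | i j. i < dim_row M \<and> j < dim_col M} \<union> {0})"

definition zero_row :: "'a::zero poly mat \<Rightarrow> nat \<Rightarrow> bool" where
  "zero_row M i \<longleftrightarrow> (\<forall>j < dim_col M. M $$ (i, j) = 0)"

definition no_zero_row :: "'a::zero poly mat \<Rightarrow> bool" where
  "no_zero_row M \<longleftrightarrow> (\<forall>i < dim_row M. \<not> zero_row M i)"

definition lead_mat :: "'a::zero poly mat \<Rightarrow> 'a mat" where
  "lead_mat M = mat (dim_row M) (dim_col M) (\<lambda>(i, j). coeff (M $$ (i, j)) (row_deg M i))"

definition full_row_rank :: "'a::comm_ring_1 mat \<Rightarrow> bool" where
  "full_row_rank M \<longleftrightarrow>
     (\<forall>v \<in> carrier_vec (dim_row M). transpose_mat M *\<^sub>v v = 0\<^sub>v (dim_col M) \<longrightarrow> v = 0\<^sub>v (dim_row M))"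

definition row_reduced :: "'a::field poly mat \<Rightarrow> bool" where
  "row_reduced R \<longleftrightarrow> dim_row R \<le> dim_col R \<and> no_zero_row R \<and> full_row_rank (lead_mat R)"

definition pivot_index :: "'a::zero poly mat \<Rightarrow> nat \<Rightarrow> nat" where
  "pivot_index M i = (GREATEST j. j < dim_col M \<and> M $$ (i, j) \<noteq> 0 \<and> degree (M $$ (i, j)) = row_deg M i)"

definition is_popov :: "'a::field poly mat \<Rightarrow> bool" where
  "is_popov P \<longleftrightarrow> no_zero_row P
     \<and> (\<forall>i i'. i < i' \<and> i' < dim_row P \<longrightarrow> pivot_index P i < pivot_index P i')
     \<and> (\<forall>i < dim_row P. lead_coeff (P $$ (i, pivot_index P i)) = 1)
     \<and> (\<forall>i < dim_row P. \<forall>k < dim_row P. k \<noteq> i \<longrightarrow>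
          P $$ (k, pivot_index P i) = 0 \<or>
          degree (P $$ (k, pivot_index P i)) < degree (P $$ (i, pivot_index P i)))"

definition row_module :: "'a::comm_ring_1 mat \<Rightarrow> 'a vec set" where
  "row_module A = {transpose_mat A *\<^sub>v v | v. v \<in> carrier_vec (dim_row A)}"

definition popov_form :: "'a::field poly mat \<Rightarrow> 'a poly mat" where
  "popov_form A = (THE P. dim_col P = dim_col A \<and> is_popov P \<and> row_module P = row_module A)"

definition is_completion :: "'a::field poly mat \<Rightarrow> 'a poly mat \<Rightarrow> bool" where
  "is_completion A C \<longleftrightarrow>
     (let P = popov_form A in
        C \<in> carrier_mat (dim_col A - dim_row A) (dim_col A)
        \<and> (\<forall>i < dim_row C. row_deg C i > mat_deg P)
        \<and> row_reduced (P @\<^sub>r C))"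

definition xpow_smult :: "nat \<Rightarrow> 'a::zero mat \<Rightarrow> 'a poly mat" where
  "xpow_smult d L = map_mat (\<lambda>c. monom c d) L"

definition mats_over :: "'a set \<Rightarrow> nat \<Rightarrow> nat \<Rightarrow> 'a mat set" where
  "mats_over S k n = {L \<in> carrier_mat k n. \<forall>i < k. \<forall>j < n. L $$ (i, j) \<in> S}"

end

theory Submission
  imports Defs "Jordan_Normal_Form.Gauss_Jordan_Elimination" "HOL-Library.FuncSet"
begin

text \<open>Let \<open>P\<close> be the Popov form of \<open>A\<close>; its degree is at most \<open>deg A\<close>. The rows of
  \<open>x\<^bsup>deg A + 1\<^esup> L\<close> have degree \<open>deg A + 1 > deg P\<close> and leading matrix \<open>L\<close>, so stacking them under
  \<open>P\<close> gives a row reduced matrix as soon as the constant matrix \<open>[lm(P); L]\<close> has full rank. The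
  leading matrix of a Popov matrix is in echelon form, hence has full rank \<open>m\<close>, and it remains to
  count the extensions of \<open>m\<close> independent rows by \<open>n - m\<close> rows over \<open>S\<close> that stay independent.
  Adding the rows one at a time, a row over \<open>S\<close> that depends on \<open>s < n\<close> independent rows lies on
  a fixed hyperplane, which leaves at most \<open>q\<^bsup>n-1\<^esup>\<close> choices, and when \<open>S\<close> is the whole finite
  field it lies in their span, which leaves \<open>q\<^bsup>s\<^esup>\<close> choices. This gives the factors \<open>1 - 1/q\<close>
  and \<open>1 - q\<^bsup>s-n\<^esup>\<close>; Bernoulli's inequality turns the first product into \<open>1 - (n - m)/q\<close>.

  The Popov form is obtained by row reduction with respect to the degree-then-position order on the
  monomials \<open>x\<^sup>t e\<^sub>j\<close>; it is unique because a combination of the rows of a Popov matrix has a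
  predictable leading monomial.\<close>

subsection \<open>Independent rows and row modules\<close>

lemma sum_mult_delta:
  fixes f :: "nat \<Rightarrow> 'a::comm_ring_1"
  assumes "i < m"
  shows "(\<Sum>b<m. f b * (if b = i then c else 0)) = f i * c"
proof -
  have "(\<Sum>b<m. f b * (if b = i then c else 0)) = (\<Sum>b<m. if b = i then f b * c else 0)"
    by (rule sum.cong) auto
  also have "\<dots> = f i * c" using assms by (simp add: sum.delta')
  finally show ?thesis .
qed

definition indep_rows :: "nat \<Rightarrow> nat \<Rightarrow> (nat \<Rightarrow> nat \<Rightarrow> 'a::comm_ring_1) \<Rightarrow> bool" where
  "indep_rows s n R \<longleftrightarrow> (\<forall>u. (\<forall>j<n. (\<Sum>b<s. R b j * u b) = 0) \<longrightarrow> (\<forall>b<s. u b = 0))"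

lemma indep_rows_cong:
  "(\<And>b j. b < s \<Longrightarrow> j < n \<Longrightarrow> R b j = R' b j) \<Longrightarrow> indep_rows s n R = indep_rows s n R'"
  unfolding indep_rows_def by simp

lemma full_row_rank_iff_indep_rows:
  "full_row_rank M \<longleftrightarrow> indep_rows (dim_row M) (dim_col M) (\<lambda>b j. M $$ (b, j))"
  unfolding indep_rows_def
proof
  assume fr: "full_row_rank M"
  show "\<forall>u. (\<forall>j<dim_col M. (\<Sum>b<dim_row M. M $$ (b, j) * u b) = 0) \<longrightarrow> (\<forall>b<dim_row M. u b = 0)"
  proof (intro allI impI)
    fix u b assume h: "\<forall>j<dim_col M. (\<Sum>b<dim_row M. M $$ (b, j) * u b) = 0" and b: "b < dim_row M"
    have "transpose_mat M *\<^sub>v vec (dim_row M) u = 0\<^sub>v (dim_col M)"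
      by (rule eq_vecI, insert h, auto simp: scalar_prod_def atLeast0LessThan)
    with fr have "vec (dim_row M) u = 0\<^sub>v (dim_row M)" unfolding full_row_rank_def by auto
    then have "vec (dim_row M) u $ b = 0" using b by simp
    then show "u b = 0" using b by simp
  qed
next
  assume h: "\<forall>u. (\<forall>j<dim_col M. (\<Sum>b<dim_row M. M $$ (b, j) * u b) = 0) \<longrightarrow> (\<forall>b<dim_row M. u b = 0)"
  show "full_row_rank M" unfolding full_row_rank_def
  proof (intro ballI impI)
    fix v :: "'a vec"
    assume v: "v \<in> carrier_vec (dim_row M)" and e: "transpose_mat M *\<^sub>v v = 0\<^sub>v (dim_col M)"
    have "\<forall>j<dim_col M. (\<Sum>b<dim_row M. M $$ (b, j) * v $ b) = 0"
    proof (intro allI impI)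
      fix j assume j: "j < dim_col M"
      have "(transpose_mat M *\<^sub>v v) $ j = 0" using e j by simp
      then show "(\<Sum>b<dim_row M. M $$ (b, j) * v $ b) = 0"
        using j v by (simp add: scalar_prod_def atLeast0LessThan)
    qed
    with h have "\<forall>b<dim_row M. v $ b = 0" by blast
    then show "v = 0\<^sub>v (dim_row M)" using v by auto
  qed
qed

lemma indep_rows_nonzero_row:
  fixes R :: "nat \<Rightarrow> nat \<Rightarrow> 'a::comm_ring_1"
  assumes "indep_rows s n R" and "i < s"
  shows "\<exists>j<n. R i j \<noteq> 0"
proof (rule ccontr)
  assume "\<not> ?thesis"
  then have "\<forall>j<n. (\<Sum>b<s. R b j * (if b = i then 1 else 0)) = 0"
    by (simp add: sum_mult_delta[OF assms(2), of "\<lambda>b. R b _"])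
  then have "\<forall>b<s. (if b = i then 1 else 0 :: 'a) = 0"
    using assms(1)[unfolded indep_rows_def, THEN spec[of _ "\<lambda>b. if b = i then 1 else 0"]] by blast
  then show False using assms(2) by (metis one_neq_zero)
qed

lemma full_row_rank_no_zero_row:
  fixes P :: "'a::comm_ring_1 poly mat"
  assumes "full_row_rank P"
  shows "no_zero_row P"
  using indep_rows_nonzero_row assms unfolding full_row_rank_iff_indep_rows no_zero_row_def zero_row_def
  by blast

lemma row_module_iff:
  "v \<in> row_module A \<longleftrightarrow> v \<in> carrier_vec (dim_col A) \<and>
     (\<exists>u. \<forall>j<dim_col A. v $ j = (\<Sum>b<dim_row A. A $$ (b, j) * u b))"
proof
  assume "v \<in> row_module A"
  then obtain w where w: "w \<in> carrier_vec (dim_row A)" and v: "v = transpose_mat A *\<^sub>v w"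
    unfolding row_module_def by auto
  have "\<forall>j<dim_col A. v $ j = (\<Sum>b<dim_row A. A $$ (b, j) * w $ b)"
    unfolding v using w by (simp add: scalar_prod_def atLeast0LessThan)
  moreover have "v \<in> carrier_vec (dim_col A)" unfolding v carrier_vec_def by simp
  ultimately show "v \<in> carrier_vec (dim_col A) \<and> (\<exists>u. \<forall>j<dim_col A. v $ j = (\<Sum>b<dim_row A. A $$ (b, j) * u b))"
    by blast
next
  assume "v \<in> carrier_vec (dim_col A) \<and> (\<exists>u. \<forall>j<dim_col A. v $ j = (\<Sum>b<dim_row A. A $$ (b, j) * u b))"
  then obtain u where v: "v \<in> carrier_vec (dim_col A)"
    and u: "\<forall>j<dim_col A. v $ j = (\<Sum>b<dim_row A. A $$ (b, j) * u b)" by blast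
  have "v = transpose_mat A *\<^sub>v vec (dim_row A) u"
    by (rule eq_vecI, insert v u, auto simp: scalar_prod_def atLeast0LessThan)
  then show "v \<in> row_module A" unfolding row_module_def by auto
qed

lemma row_module_mono:
  assumes cols: "dim_col B = dim_col A"
    and rows: "\<And>a. a < dim_row B \<Longrightarrow> \<exists>u. \<forall>j<dim_col A. B $$ (a, j) = (\<Sum>b<dim_row A. A $$ (b, j) * u b)"
  shows "row_module B \<subseteq> row_module A"
proof
  fix v assume "v \<in> row_module B"
  then obtain w where v: "v \<in> carrier_vec (dim_col B)"
    and w: "\<forall>j<dim_col B. v $ j = (\<Sum>a<dim_row B. B $$ (a, j) * w a)"
    unfolding row_module_iff by blast
  obtain U where U: "\<And>a j. a < dim_row B \<Longrightarrow> j < dim_col A \<Longrightarrow> B $$ (a, j) = (\<Sum>b<dim_row A. A $$ (b, j) * U a b)"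
    using rows by (metis (no_types))
  have "v $ j = (\<Sum>b<dim_row A. A $$ (b, j) * (\<Sum>a<dim_row B. U a b * w a))" if j: "j < dim_col A" for j
  proof -
    have "v $ j = (\<Sum>a<dim_row B. (\<Sum>b<dim_row A. A $$ (b, j) * U a b) * w a)"
      using w U j cols by simp
    also have "\<dots> = (\<Sum>a<dim_row B. \<Sum>b<dim_row A. A $$ (b, j) * (U a b * w a))"
      by (simp add: sum_distrib_right mult.assoc)
    also have "\<dots> = (\<Sum>b<dim_row A. \<Sum>a<dim_row B. A $$ (b, j) * (U a b * w a))"
      by (rule sum.swap)
    also have "\<dots> = (\<Sum>b<dim_row A. A $$ (b, j) * (\<Sum>a<dim_row B. U a b * w a))"
      by (simp add: sum_distrib_left)
    finally show ?thesis .
  qed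
  then show "v \<in> row_module A" using v cols unfolding row_module_iff by auto
qed

lemma row_combination_of_subset:
  fixes P Q :: "'a::comm_ring_1 mat"
  assumes sub: "row_module Q \<subseteq> row_module P" and b: "b < dim_row Q" and cols: "dim_col Q = dim_col P"
  shows "\<exists>u. \<forall>j<dim_col P. Q $$ (b, j) = (\<Sum>a<dim_row P. P $$ (a, j) * u a)"
proof -
  define v where "v = vec (dim_col Q) (\<lambda>j. Q $$ (b, j))"
  have "\<forall>j<dim_col Q. v $ j = (\<Sum>a<dim_row Q. Q $$ (a, j) * (if a = b then 1 else 0))"
    unfolding v_def by (simp only: sum_mult_delta[OF b]) simp
  then have "v \<in> row_module Q" unfolding row_module_iff v_def by auto
  then have "v \<in> row_module P" using sub by blast
  then obtain w where "\<forall>j<dim_col P. v $ j = (\<Sum>a<dim_row P. P $$ (a, j) * w a)"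
    unfolding row_module_iff by blast
  then show ?thesis using cols unfolding v_def by auto
qed

lemma no_zero_row_iff: "no_zero_row P \<longleftrightarrow> (\<forall>i<dim_row P. \<exists>j<dim_col P. P $$ (i, j) \<noteq> 0)"
  unfolding no_zero_row_def zero_row_def by blast

subsection \<open>Row operations\<close>

lemma row_module_addrow_subset:
  fixes P :: "'a::comm_ring_1 mat"
  assumes i: "i < dim_row P" and k: "k < dim_row P"
  shows "row_module (addrow p i k P) \<subseteq> row_module P"
proof (rule row_module_mono)
  fix a assume "a < dim_row (addrow p i k P)"
  then have a: "a < dim_row P" by simp
  define u where "u b = (if b = a then 1 else 0) + (if a = i \<and> b = k then p else 0)" for b
  have "addrow p i k P $$ (a, j) = (\<Sum>b<dim_row P. P $$ (b, j) * u b)" if j: "j < dim_col P" for j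
  proof -
    have "(\<Sum>b<dim_row P. P $$ (b, j) * u b)
        = (\<Sum>b<dim_row P. P $$ (b, j) * (if b = a then 1 else 0))
          + (\<Sum>b<dim_row P. P $$ (b, j) * (if b = k then (if a = i then p else 0) else 0))"
      unfolding u_def by (simp add: distrib_left sum.distrib if_distrib[of "\<lambda>x. _ * x"] conj_commute)
    also have "\<dots> = P $$ (a, j) + P $$ (k, j) * (if a = i then p else 0)"
      using a k by (simp only: sum_mult_delta) simp
    finally show ?thesis using a j by (auto simp: mult.commute)
  qed
  then show "\<exists>u. \<forall>j<dim_col P. addrow p i k P $$ (a, j) = (\<Sum>b<dim_row P. P $$ (b, j) * u b)"
    by blast
qed simp

lemma row_module_addrow:
  fixes P :: "'a::comm_ring_1 mat"
  assumes "i \<noteq> k" "i < dim_row P" "k < dim_row P"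
  shows "row_module (addrow p i k P) = row_module P"
proof
  show "row_module (addrow p i k P) \<subseteq> row_module P"
    using assms by (intro row_module_addrow_subset)
  have "addrow (- p) i k (addrow p i k P) = P"
    by (rule eq_matI) (use assms in auto)
  moreover have "row_module (addrow (- p) i k (addrow p i k P)) \<subseteq> row_module (addrow p i k P)"
    using assms by (intro row_module_addrow_subset) auto
  ultimately show "row_module P \<subseteq> row_module (addrow p i k P)" by simp
qed

lemma full_row_rank_addrow:
  fixes P :: "'a::comm_ring_1 mat"
  assumes ik: "i \<noteq> k" and i: "i < dim_row P" and k: "k < dim_row P" and fr: "full_row_rank P"
  shows "full_row_rank (addrow p i k P)"
  unfolding full_row_rank_iff_indep_rows indep_rows_def index_mat_addrow(4,5)
proof (intro allI impI)
  fix w b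
  assume h: "\<forall>j<dim_col P. (\<Sum>b<dim_row P. addrow p i k P $$ (b, j) * w b) = 0" and b: "b < dim_row P"
  define w' where "w' = w(k := w k + p * w i)"
  \<comment> \<open>a dependency of the new rows with coefficients \<open>w\<close> is one of the old rows with coefficients \<open>w'\<close>\<close>
  have "(\<Sum>a<dim_row P. P $$ (a, j) * w' a) = (\<Sum>a<dim_row P. addrow p i k P $$ (a, j) * w a)"
    if j: "j < dim_col P" for j
  proof -
    have "(\<Sum>a<dim_row P. addrow p i k P $$ (a, j) * w a)
        = (\<Sum>a<dim_row P. P $$ (a, j) * w a + (if a = i then p * P $$ (k, j) * w i else 0))"
      by (rule sum.cong) (use j in \<open>auto simp: algebra_simps\<close>)
    also have "\<dots> = (\<Sum>a<dim_row P. P $$ (a, j) * w a) + p * P $$ (k, j) * w i"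
      using i by (simp add: sum.distrib sum.delta')
    also have "\<dots> = (\<Sum>a<dim_row P. P $$ (a, j) * w a + (if a = k then P $$ (k, j) * (p * w i) else 0))"
      using k by (simp add: sum.distrib sum.delta' algebra_simps)
    also have "\<dots> = (\<Sum>a<dim_row P. P $$ (a, j) * w' a)"
      by (rule sum.cong) (auto simp: w'_def algebra_simps)
    finally show ?thesis by simp
  qed
  then have "\<forall>a<dim_row P. w' a = 0"
    using fr h unfolding full_row_rank_iff_indep_rows indep_rows_def by simp
  then have "\<forall>a<dim_row P. a \<noteq> k \<longrightarrow> w a = 0" and "w k + p * w i = 0"
    unfolding w'_def using k by (auto split: if_splits)
  then show "w b = 0" using ik i b by (cases "b = k") auto
qed

definition perm_scale_rows :: "nat \<Rightarrow> nat \<Rightarrow> (nat \<Rightarrow> nat) \<Rightarrow> (nat \<Rightarrow> 'a::field) \<Rightarrow> 'a poly mat \<Rightarrow> 'a poly mat" where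
  "perm_scale_rows m n \<sigma> c P = mat m n (\<lambda>(a, j). Polynomial.smult (c a) (P $$ (\<sigma> a, j)))"

lemma row_module_perm_scale_rows:
  fixes P :: "'a::field poly mat"
  assumes P: "P \<in> carrier_mat m n" and \<sigma>: "bij_betw \<sigma> {..<m} {..<m}" and c: "\<forall>a<m. c a \<noteq> 0"
  shows "row_module (perm_scale_rows m n \<sigma> c P) = row_module P"
proof
  let ?Q = "perm_scale_rows m n \<sigma> c P"
  have Q: "dim_row ?Q = m" "dim_col ?Q = n" unfolding perm_scale_rows_def by auto
  have Qi: "?Q $$ (a, j) = Polynomial.smult (c a) (P $$ (\<sigma> a, j))" if "a < m" "j < n" for a j
    unfolding perm_scale_rows_def using that by simp
  show "row_module ?Q \<subseteq> row_module P"
  proof (rule row_module_mono)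
    fix a assume a: "a < dim_row ?Q"
    have sa: "\<sigma> a < m" using \<sigma> a Q by (auto simp: bij_betw_def)
    have "\<forall>j<dim_col P. ?Q $$ (a, j) = (\<Sum>b<dim_row P. P $$ (b, j) * (if b = \<sigma> a then [:c a:] else 0))"
      using a sa P Q by (simp add: sum_mult_delta Qi)
    then show "\<exists>u. \<forall>j<dim_col P. ?Q $$ (a, j) = (\<Sum>b<dim_row P. P $$ (b, j) * u b)"
      by (rule exI[where x="\<lambda>b. if b = \<sigma> a then [:c a:] else 0"])
  qed (use P Q in simp)
  show "row_module P \<subseteq> row_module ?Q"
  proof (rule row_module_mono)
    fix b assume b: "b < dim_row P"
    define a where "a = inv_into {..<m} \<sigma> b"
    have bm: "b \<in> \<sigma> ` {..<m}" using \<sigma> b P by (auto simp: bij_betw_def)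
    have a: "a < m" "\<sigma> a = b" unfolding a_def using inv_into_into[OF bm] f_inv_into_f[OF bm] by auto
    have "P $$ (b, j) = (\<Sum>a'<dim_row ?Q. ?Q $$ (a', j) * (if a' = a then [:1 / c a:] else 0))"
      if j: "j < dim_col ?Q" for j
    proof -
      have "(\<Sum>a'<dim_row ?Q. ?Q $$ (a', j) * (if a' = a then [:1 / c a:] else 0)) = ?Q $$ (a, j) * [:1 / c a:]"
        unfolding Q by (rule sum_mult_delta[OF a(1)])
      also have "\<dots> = P $$ (b, j)" using a j Q c by (simp add: Qi)
      finally show ?thesis by simp
    qed
    then show "\<exists>u. \<forall>j<dim_col ?Q. P $$ (b, j) = (\<Sum>a<dim_row ?Q. ?Q $$ (a, j) * u a)"
      by (intro exI[where x="\<lambda>a'. if a' = a then [:1 / c a:] else 0"] allI impI)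
  qed (use P Q in simp)
qed

subsection \<open>Leading monomials of polynomial rows\<close>

text \<open>A row \<open>r\<close> of length \<open>n\<close> is a vector of polynomials; its monomial \<open>x\<^sup>t e\<^sub>j\<close> is indexed by
  \<open>t * n + j\<close>. Comparing indices is the degree-then-position order, so the largest index with a
  nonzero coefficient encodes both the row degree (\<open>div n\<close>) and the pivot index (\<open>mod n\<close>).\<close>

definition mon_coeff :: "nat \<Rightarrow> (nat \<Rightarrow> 'a::zero poly) \<Rightarrow> nat \<Rightarrow> 'a" where
  "mon_coeff n r N = coeff (r (N mod n)) (N div n)"

definition vanishes_above :: "nat \<Rightarrow> (nat \<Rightarrow> 'a::zero poly) \<Rightarrow> nat \<Rightarrow> bool" where
  "vanishes_above n r L \<longleftrightarrow> (\<forall>N>L. mon_coeff n r N = 0)"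

definition lead_index :: "nat \<Rightarrow> (nat \<Rightarrow> 'a::zero poly) \<Rightarrow> nat" where
  "lead_index n r = Max {N. mon_coeff n r N \<noteq> 0}"

lemma mon_coeff_index: "j < n \<Longrightarrow> mon_coeff n r (t * n + j) = coeff (r j) t"
  unfolding mon_coeff_def by simp

lemma mon_coeff_cong: "(\<And>j. j < n \<Longrightarrow> r j = r' j) \<Longrightarrow> 0 < n \<Longrightarrow> mon_coeff n r N = mon_coeff n r' N"
  unfolding mon_coeff_def by simp

lemma lead_index_cong: "(\<And>j. j < n \<Longrightarrow> r j = r' j) \<Longrightarrow> 0 < n \<Longrightarrow> lead_index n r = lead_index n r'"
  unfolding lead_index_def using mon_coeff_cong[of n r r'] by presburger

lemma mon_coeff_add: "mon_coeff n (\<lambda>j. f j + g j) N = mon_coeff n f N + mon_coeff n g N"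
  unfolding mon_coeff_def by simp

lemma mon_coeff_sum: "mon_coeff n (\<lambda>j. \<Sum>i\<in>I. F i j) N = (\<Sum>i\<in>I. mon_coeff n (F i) N)"
  unfolding mon_coeff_def by (simp add: coeff_sum)

lemma mon_coeff_smult: "mon_coeff n (\<lambda>j. Polynomial.smult c (f j)) N = c * mon_coeff n f N"
  unfolding mon_coeff_def by simp

lemma finite_mon_coeff_support:
  assumes n: "0 < n"
  shows "finite {N. mon_coeff n r N \<noteq> 0}"
proof -
  define D where "D = Max ((\<lambda>j. degree (r j)) ` {..<n})"
  have "{N. mon_coeff n r N \<noteq> 0} \<subseteq> {..<(D + 1) * n}"
  proof
    fix N assume "N \<in> {N. mon_coeff n r N \<noteq> 0}"
    then have "N div n \<le> degree (r (N mod n))" unfolding mon_coeff_def using le_degree by blast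
    also have "\<dots> \<le> D" unfolding D_def using n by (intro Max_ge) auto
    finally have "N div n < D + 1" by simp
    then show "N \<in> {..<(D + 1) * n}" using div_less_iff_less_mult[OF n] by simp
  qed
  then show ?thesis using finite_subset by blast
qed

lemma lead_index_spec:
  assumes n: "0 < n" and j: "j < n" and rj: "r j \<noteq> 0"
  shows "mon_coeff n r (lead_index n r) \<noteq> 0" and "vanishes_above n r (lead_index n r)"
proof -
  have "mon_coeff n r (degree (r j) * n + j) \<noteq> 0" using j rj by (simp add: mon_coeff_index)
  then have ne: "{N. mon_coeff n r N \<noteq> 0} \<noteq> {}" by blast
  show "mon_coeff n r (lead_index n r) \<noteq> 0"
    unfolding lead_index_def using Max_in[OF finite_mon_coeff_support[OF n] ne] by simp
  show "vanishes_above n r (lead_index n r)"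
    unfolding vanishes_above_def lead_index_def
  proof (intro allI impI)
    fix N assume N: "Max {N. mon_coeff n r N \<noteq> 0} < N"
    show "mon_coeff n r N = 0"
    proof (rule ccontr)
      assume "mon_coeff n r N \<noteq> 0"
      then have "N \<le> Max {N. mon_coeff n r N \<noteq> 0}" by (intro Max_ge[OF finite_mon_coeff_support[OF n]]) simp
      then show False using N by simp
    qed
  qed
qed

lemma lead_index_eqI:
  assumes n: "0 < n" and "mon_coeff n r L \<noteq> 0" and "vanishes_above n r L"
  shows "lead_index n r = L"
  unfolding lead_index_def
proof (rule Max_eqI)
  show "finite {N. mon_coeff n r N \<noteq> 0}" by (rule finite_mon_coeff_support[OF n])
  show "y \<le> L" if "y \<in> {N. mon_coeff n r N \<noteq> 0}" for y
    using that assms(3) leI unfolding vanishes_above_def by blast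
qed (use assms in simp)

lemma coeff_eq_0_if_vanishes_above:
  assumes "vanishes_above n r L" and "j < n" and "L < t * n + j"
  shows "coeff (r j) t = 0"
proof -
  have "mon_coeff n r (t * n + j) = 0" using assms(1,3) unfolding vanishes_above_def by blast
  then show ?thesis using assms(2) by (simp add: mon_coeff_index)
qed

lemma degree_le_if_vanishes_above:
  assumes n: "0 < n" and L: "vanishes_above n r L" and j: "j < n"
  shows "degree (r j) \<le> L div n"
proof (rule ccontr)
  assume "\<not> degree (r j) \<le> L div n"
  then have "L < degree (r j) * n + j"
    using div_less_iff_less_mult[OF n, of L "degree (r j)"] by simp
  then have "lead_coeff (r j) = 0" using coeff_eq_0_if_vanishes_above[OF L j] by blast
  then show False using \<open>\<not> degree (r j) \<le> L div n\<close> by simp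
qed

lemma degree_at_lead_position:
  assumes n: "0 < n" and "mon_coeff n r L \<noteq> 0" and "vanishes_above n r L"
  shows "degree (r (L mod n)) = L div n" and "r (L mod n) \<noteq> 0"
proof -
  have c: "coeff (r (L mod n)) (L div n) \<noteq> 0" using assms(2) unfolding mon_coeff_def .
  then show "r (L mod n) \<noteq> 0" by auto
  show "degree (r (L mod n)) = L div n"
    using le_degree[OF c] degree_le_if_vanishes_above[OF n assms(3)] n by (simp add: le_antisym)
qed

lemma row_deg_pivot_index_eq:
  fixes M :: "'a::zero poly mat"
  assumes n: "0 < dim_col M" and L: "mon_coeff (dim_col M) (\<lambda>j. M $$ (i, j)) L \<noteq> 0"
    "vanishes_above (dim_col M) (\<lambda>j. M $$ (i, j)) L"
  shows "row_deg M i = L div dim_col M" and "pivot_index M i = L mod dim_col M"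
proof -
  let ?n = "dim_col M" and ?r = "\<lambda>j. M $$ (i, j)"
  have dg: "degree (?r (L mod ?n)) = L div ?n" and nz: "?r (L mod ?n) \<noteq> 0"
    using degree_at_lead_position[OF n L] by auto
  have jl: "L mod ?n < ?n" using n by simp
  show rd: "row_deg M i = L div ?n" unfolding row_deg_def
  proof (rule Max_eqI)
    show "y \<le> L div ?n" if "y \<in> {degree (M $$ (i, j)) |j. j < ?n} \<union> {0}" for y
      using that degree_le_if_vanishes_above[OF n L(2)] by auto
    show "L div ?n \<in> {degree (M $$ (i, j)) |j. j < ?n} \<union> {0}" using dg jl by force
  qed simp
  show "pivot_index M i = L mod ?n" unfolding pivot_index_def rd
  proof (rule Greatest_equality)
    fix j assume h: "j < ?n \<and> M $$ (i, j) \<noteq> 0 \<and> degree (M $$ (i, j)) = L div ?n"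
    have "lead_coeff (?r j) \<noteq> 0" using h[THEN conjunct2, THEN conjunct1] by simp
    then have "mon_coeff ?n ?r ((L div ?n) * ?n + j) \<noteq> 0" using h by (simp add: mon_coeff_index)
    then have "(L div ?n) * ?n + j \<le> L" using L(2) unfolding vanishes_above_def using not_le by blast
    then show "j \<le> L mod ?n" using div_mult_mod_eq[of L ?n] by linarith
  qed (use jl nz dg in simp)
qed

lemma vanishes_above_mult:
  fixes p :: "'a::comm_ring_1 poly"
  assumes n: "0 < n" and L: "vanishes_above n r L"
  shows "vanishes_above n (\<lambda>j. p * r j) (L + n * degree p)"
  unfolding vanishes_above_def
proof (intro allI impI)
  fix N assume N: "L + n * degree p < N"
  define t where "t = N div n"
  define j where "j = N mod n"
  have j: "j < n" using n by (simp add: j_def)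
  have "coeff p s * coeff (r j) (t - s) = 0" if s: "s \<le> t" for s
  proof (cases "s \<le> degree p")
    case True
    have "s * n \<le> degree p * n" using True by (rule mult_right_mono) simp
    moreover have "s * n \<le> t * n" using s by (rule mult_right_mono) simp
    moreover have "(t - s) * n = t * n - s * n" by (simp add: diff_mult_distrib)
    moreover have "t * n + j = N" by (simp add: t_def j_def)
    moreover have "n * degree p = degree p * n" by simp
    ultimately have "L < (t - s) * n + j" using N by linarith
    then show ?thesis using coeff_eq_0_if_vanishes_above[OF L j] by simp
  qed (simp add: coeff_eq_0)
  then have "coeff (p * r j) t = 0" unfolding coeff_mult by (intro sum.neutral) auto
  then show "mon_coeff n (\<lambda>j. p * r j) N = 0" unfolding mon_coeff_def t_def j_def .
qed

lemma mon_coeff_mult_lead: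
  fixes p :: "'a::comm_ring_1 poly"
  assumes n: "0 < n" and L: "vanishes_above n r L"
  shows "mon_coeff n (\<lambda>j. p * r j) (L + n * degree p) = lead_coeff p * mon_coeff n r L"
proof -
  define t where "t = L div n + degree p"
  define j where "j = L mod n"
  have j: "j < n" using n by (simp add: j_def)
  have N: "L + n * degree p = t * n + j" by (simp add: t_def j_def algebra_simps)
  have summand: "coeff p s * coeff (r j) (t - s) = (if s = degree p then lead_coeff p * mon_coeff n r L else 0)"
    for s
  proof (cases s "degree p" rule: linorder_cases)
    case less
    then have "(L div n + 1) * n \<le> (t - s) * n" unfolding t_def by (intro mult_right_mono) auto
    moreover have "(L div n + 1) * n = L div n * n + n" by simp
    ultimately have "L < (t - s) * n + j" using div_mult_mod_eq[of L n] j unfolding j_def by linarith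
    then show ?thesis using coeff_eq_0_if_vanishes_above[OF L j] less by simp
  qed (simp_all add: coeff_eq_0 mon_coeff_def t_def j_def)
  have "coeff (p * r j) t = (\<Sum>s\<le>t. if s = degree p then lead_coeff p * mon_coeff n r L else 0)"
    unfolding coeff_mult by (simp only: summand)
  also have "\<dots> = lead_coeff p * mon_coeff n r L" by (simp add: t_def)
  finally show ?thesis unfolding N using j by (simp add: mon_coeff_index)
qed

lemma mon_coeff_cancel:
  fixes r s :: "nat \<Rightarrow> 'a::field poly"
  assumes n: "0 < n" and L: "mon_coeff n r L \<noteq> 0" "vanishes_above n r L"
    and N: "L \<le> N" "N mod n = L mod n"
  defines "p \<equiv> - monom (mon_coeff n s N / mon_coeff n r L) (N div n - L div n)"
  shows "mon_coeff n (\<lambda>j. p * r j + s j) N = 0"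
    and "\<And>N'. N < N' \<Longrightarrow> mon_coeff n (\<lambda>j. p * r j + s j) N' = mon_coeff n s N'"
proof -
  consider "mon_coeff n s N = 0" | "mon_coeff n s N \<noteq> 0" by blast
  then have "mon_coeff n (\<lambda>j. p * r j + s j) N = 0 \<and>
      (\<forall>N'>N. mon_coeff n (\<lambda>j. p * r j + s j) N' = mon_coeff n s N')"
  proof cases
    case 1
    then show ?thesis unfolding p_def by (simp add: mon_coeff_add)
  next
    case 2
    let ?c = "mon_coeff n s N / mon_coeff n r L"
    have c: "?c \<noteq> 0" using 2 L by simp
    then have dp: "degree p = N div n - L div n" and lp: "lead_coeff p = - ?c"
      unfolding p_def by (simp_all add: degree_monom_eq)
    have "L div n * n \<le> N div n * n" using div_le_mono[OF N(1)] by simp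
    moreover have "n * degree p = N div n * n - L div n * n"
      unfolding dp by (simp add: diff_mult_distrib2 mult.commute)
    ultimately have LN: "L + n * degree p = N"
      using div_mult_mod_eq[of L n] div_mult_mod_eq[of N n] N(2) by linarith
    have "vanishes_above n (\<lambda>j. p * r j) N"
      using vanishes_above_mult[OF n L(2), of p] unfolding LN .
    moreover have "mon_coeff n (\<lambda>j. p * r j) N = - mon_coeff n s N"
      using mon_coeff_mult_lead[OF n L(2), of p] L(1) unfolding LN lp by simp
    ultimately show ?thesis unfolding vanishes_above_def by (simp add: mon_coeff_add)
  qed
  then show "mon_coeff n (\<lambda>j. p * r j + s j) N = 0"
    and "\<And>N'. N < N' \<Longrightarrow> mon_coeff n (\<lambda>j. p * r j + s j) N' = mon_coeff n s N'"
    by auto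
qed

lemma lead_index_eq_if_agree_above:
  assumes n: "0 < n" and L: "mon_coeff n r L \<noteq> 0" "vanishes_above n r L" and "N0 < L"
    and agree: "\<And>N. N0 < N \<Longrightarrow> mon_coeff n r' N = mon_coeff n r N"
  shows "lead_index n r' = L" and "mon_coeff n r' L = mon_coeff n r L"
proof -
  show c: "mon_coeff n r' L = mon_coeff n r L" using agree \<open>N0 < L\<close> by simp
  have "vanishes_above n r' L" using L(2) agree \<open>N0 < L\<close> unfolding vanishes_above_def by simp
  then show "lead_index n r' = L" using lead_index_eqI[OF n, of r' L] L(1) c by simp
qed

subsection \<open>Existence of the Popov form\<close>

abbreviation row_lead :: "'a::zero poly mat \<Rightarrow> nat \<Rightarrow> nat" where
  "row_lead P i \<equiv> lead_index (dim_col P) (\<lambda>j. P $$ (i, j))"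

lemma row_lead_spec:
  fixes P :: "'a::zero poly mat"
  assumes "no_zero_row P" and "i < dim_row P" and "0 < dim_col P"
  shows "mon_coeff (dim_col P) (\<lambda>j. P $$ (i, j)) (row_lead P i) \<noteq> 0"
    and "vanishes_above (dim_col P) (\<lambda>j. P $$ (i, j)) (row_lead P i)"
  using lead_index_spec[OF assms(3), of _ "\<lambda>j. P $$ (i, j)"] assms(1,2) unfolding no_zero_row_iff by blast+

lemma finite_entry_degrees: "finite {degree (M $$ (i, j)) |i j. i < dim_row M \<and> j < dim_col M}"
proof -
  have "{degree (M $$ (i, j)) |i j. i < dim_row M \<and> j < dim_col M}
      \<subseteq> (\<lambda>(i, j). degree (M $$ (i, j))) ` ({..<dim_row M} \<times> {..<dim_col M})"
    by auto
  then show ?thesis using finite_subset by blast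
qed

lemma mat_deg_le_iff:
  "mat_deg M \<le> D \<longleftrightarrow> (\<forall>i<dim_row M. \<forall>j<dim_col M. degree (M $$ (i, j)) \<le> D)"
  unfolding mat_deg_def using finite_entry_degrees[of M] by (subst Max_le_iff) auto

lemma row_lead_div_le_mat_deg:
  fixes P :: "'a::zero poly mat"
  assumes "no_zero_row P" and i: "i < dim_row P" and n: "0 < dim_col P"
  shows "row_lead P i div dim_col P \<le> mat_deg P"
proof -
  have "degree (P $$ (i, row_lead P i mod dim_col P)) = row_lead P i div dim_col P"
    using degree_at_lead_position[OF n row_lead_spec[OF assms]] by simp
  moreover have "row_lead P i mod dim_col P < dim_col P" using n by simp
  ultimately show ?thesis using i order_refl[of "mat_deg P"] unfolding mat_deg_le_iff by metis
qed

lemma mat_deg_le_if_row_leads_le: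
  fixes P :: "'a::zero poly mat"
  assumes "no_zero_row P" and n: "0 < dim_col P" and le: "\<And>i. i < dim_row P \<Longrightarrow> row_lead P i div dim_col P \<le> D"
  shows "mat_deg P \<le> D"
  unfolding mat_deg_le_iff
proof (intro allI impI)
  fix i j assume i: "i < dim_row P" and j: "j < dim_col P"
  have "degree (P $$ (i, j)) \<le> row_lead P i div dim_col P"
    using degree_le_if_vanishes_above[OF n row_lead_spec(2)[OF assms(1) i n] j] .
  then show "degree (P $$ (i, j)) \<le> D" using le[OF i] by simp
qed

definition weak_popov :: "'a::zero poly mat \<Rightarrow> bool" where
  "weak_popov P \<longleftrightarrow> no_zero_row P \<and> inj_on (\<lambda>i. row_lead P i mod dim_col P) {..<dim_row P}"

lemma weak_popov_step:
  fixes P :: "'a::field poly mat"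
  assumes P: "P \<in> carrier_mat m n" and n: "0 < n" and fr: "full_row_rank P"
    and ik: "i \<noteq> k" "i < m" "k < m"
    and pos: "row_lead P i mod n = row_lead P k mod n" and le: "row_lead P k \<le> row_lead P i"
  shows "\<exists>P'. P' \<in> carrier_mat m n \<and> full_row_rank P' \<and> row_module P' = row_module P
     \<and> (\<forall>a<m. row_lead P' a \<le> row_lead P a) \<and> row_lead P' i < row_lead P i"
proof -
  have dP: "dim_row P = m" "dim_col P = n" using P by auto
  have nz: "no_zero_row P" using full_row_rank_no_zero_row[OF fr] .
  define Li Lk where "Li = lead_index n (\<lambda>j. P $$ (i, j))" and "Lk = lead_index n (\<lambda>j. P $$ (k, j))"
  have Li: "vanishes_above n (\<lambda>j. P $$ (i, j)) Li" and Lk: "mon_coeff n (\<lambda>j. P $$ (k, j)) Lk \<noteq> 0"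
    "vanishes_above n (\<lambda>j. P $$ (k, j)) Lk"
    using row_lead_spec[OF nz, of i] row_lead_spec[OF nz, of k] ik dP n unfolding Li_def Lk_def by auto
  have le': "Lk \<le> Li" and pos': "Li mod n = Lk mod n" using le pos dP unfolding Li_def Lk_def by simp_all
  define p where "p = - monom (mon_coeff n (\<lambda>j. P $$ (i, j)) Li / mon_coeff n (\<lambda>j. P $$ (k, j)) Lk) (Li div n - Lk div n)"
  note cancel = mon_coeff_cancel[OF n Lk le' pos', where s="\<lambda>j. P $$ (i, j)", folded p_def]
  define P' where "P' = addrow p i k P"
  have P': "P' \<in> carrier_mat m n" unfolding P'_def using P by simp
  have fr': "full_row_rank P'" unfolding P'_def using full_row_rank_addrow[OF ik(1) _ _ fr] ik dP by simp
  have rowi: "mon_coeff n (\<lambda>j. P' $$ (i, j)) N = mon_coeff n (\<lambda>j. p * P $$ (k, j) + P $$ (i, j)) N" for N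
    unfolding P'_def using ik dP n by (intro mon_coeff_cong) simp_all
  have rowa: "(\<lambda>j. P' $$ (a, j)) j = (\<lambda>j. P $$ (a, j)) j" if "a < m" "a \<noteq> i" "j < n" for a j
    unfolding P'_def using that ik dP by simp
  have "vanishes_above n (\<lambda>j. P' $$ (i, j)) Li" unfolding vanishes_above_def
  proof (intro allI impI)
    fix N assume "Li < N"
    then show "mon_coeff n (\<lambda>j. P' $$ (i, j)) N = 0"
      using rowi cancel(2)[of N] Li unfolding vanishes_above_def by simp
  qed
  moreover have "mon_coeff n (\<lambda>j. P' $$ (i, j)) Li = 0" using rowi cancel(1) by simp
  moreover have "mon_coeff n (\<lambda>j. P' $$ (i, j)) (lead_index n (\<lambda>j. P' $$ (i, j))) \<noteq> 0"
    using row_lead_spec(1)[OF full_row_rank_no_zero_row[OF fr'], of i] P' ik n by auto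
  ultimately have "lead_index n (\<lambda>j. P' $$ (i, j)) < Li"
    unfolding vanishes_above_def by (metis linorder_neqE_nat)
  then have lt: "row_lead P' i < row_lead P i" using P' dP unfolding Li_def by simp
  have "row_lead P' a = row_lead P a" if "a < m" "a \<noteq> i" for a
    using lead_index_cong[OF rowa[OF that] n] P' dP by simp
  then have "\<forall>a<m. row_lead P' a \<le> row_lead P a" using lt by (metis order.strict_implies_order order_refl)
  moreover have "row_module P' = row_module P" unfolding P'_def using row_module_addrow[of i k P p] ik dP by simp
  ultimately show ?thesis using P' fr' lt by blast
qed

lemma weak_popov_exists:
  fixes P :: "'a::field poly mat"
  shows "P \<in> carrier_mat m n \<Longrightarrow> 0 < n \<Longrightarrow> full_row_rank P \<Longrightarrow>
    \<exists>Q. Q \<in> carrier_mat m n \<and> weak_popov Q \<and> row_module Q = row_module P \<and> (\<forall>a<m. row_lead Q a \<le> row_lead P a)"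
proof (induction "\<Sum>a<m. row_lead P a" arbitrary: P rule: less_induct)
  case less
  have dP: "dim_row P = m" "dim_col P = n" using less.prems(1) by auto
  show ?case
  proof (cases "weak_popov P")
    case True
    then show ?thesis using less.prems(1) by blast
  next
    case False
    then obtain i k where ik: "i \<noteq> k" "i < m" "k < m" and pos: "row_lead P i mod n = row_lead P k mod n"
      using full_row_rank_no_zero_row[OF less.prems(3)] dP unfolding weak_popov_def inj_on_def by auto
    have "\<exists>i k. i \<noteq> k \<and> i < m \<and> k < m \<and> row_lead P i mod n = row_lead P k mod n
        \<and> row_lead P k \<le> row_lead P i"
    proof (cases "row_lead P k \<le> row_lead P i")
      case True
      then show ?thesis using ik pos by blast
    next
      case False
      then show ?thesis using ik pos by (intro exI[of _ k] exI[of _ i]) auto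
    qed
    then obtain i k where ik: "i \<noteq> k" "i < m" "k < m"
      and pos: "row_lead P i mod n = row_lead P k mod n" and le: "row_lead P k \<le> row_lead P i"
      by blast
    obtain P' where P': "P' \<in> carrier_mat m n" "full_row_rank P'" "row_module P' = row_module P"
      "\<forall>a<m. row_lead P' a \<le> row_lead P a" "row_lead P' i < row_lead P i"
      using weak_popov_step[OF less.prems ik pos le] by blast
    have "(\<Sum>a<m. row_lead P' a) < (\<Sum>a<m. row_lead P a)"
      using P'(4,5) ik(2) by (intro sum_strict_mono_ex1) auto
    then obtain Q where Q: "Q \<in> carrier_mat m n" "weak_popov Q" "row_module Q = row_module P'"
      "\<forall>a<m. row_lead Q a \<le> row_lead P' a"
      using less.hyps[OF _ P'(1) less.prems(2) P'(2)] by blast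
    have "\<forall>a<m. row_lead Q a \<le> row_lead P a" using Q(4) P'(4) le_trans by blast
    then show ?thesis using Q P'(3) by (intro exI[of _ Q]) simp
  qed
qed

lemma sorting_permutation:
  fixes \<pi> :: "nat \<Rightarrow> 'b::linorder"
  assumes "inj_on \<pi> {..<m}"
  shows "\<exists>\<sigma>. bij_betw \<sigma> {..<m} {..<m} \<and> (\<forall>a b. a < b \<and> b < m \<longrightarrow> \<pi> (\<sigma> a) < \<pi> (\<sigma> b))"
proof -
  define s where "s = sorted_list_of_set (\<pi> ` {..<m})"
  have s: "sorted_wrt (<) s" "set s = \<pi> ` {..<m}" "length s = m"
    unfolding s_def using card_image[OF assms] by simp_all
  define \<sigma> where "\<sigma> a = inv_into {..<m} \<pi> (s ! a)" for a
  have \<sigma>: "\<sigma> a < m \<and> \<pi> (\<sigma> a) = s ! a" if "a < m" for a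
  proof -
    have h: "s ! a \<in> \<pi> ` {..<m}" using that s(2,3) nth_mem by metis
    show ?thesis unfolding \<sigma>_def using inv_into_into[OF h] f_inv_into_f[OF h] by simp
  qed
  have mono: "\<pi> (\<sigma> a) < \<pi> (\<sigma> b)" if "a < b" "b < m" for a b
    using \<sigma>[of a] \<sigma>[of b] that sorted_wrt_nth_less[OF s(1) that(1)] s(3) by simp
  have "inj_on \<sigma> {..<m}"
  proof (rule inj_onI)
    fix a b assume "a \<in> {..<m}" "b \<in> {..<m}" "\<sigma> a = \<sigma> b"
    then show "a = b" using mono[of a b] mono[of b a] by (cases a b rule: linorder_cases) auto
  qed
  then have "bij_betw \<sigma> {..<m} {..<m}"
    unfolding bij_betw_def using endo_inj_surj[of "{..<m}" \<sigma>] \<sigma> by auto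
  then show ?thesis using mono by (intro exI[of _ \<sigma>]) simp
qed

definition normalized_weak_popov :: "'a::field poly mat \<Rightarrow> bool" where
  "normalized_weak_popov P \<longleftrightarrow> no_zero_row P
     \<and> (\<forall>a b. a < b \<and> b < dim_row P \<longrightarrow> row_lead P a mod dim_col P < row_lead P b mod dim_col P)
     \<and> (\<forall>a<dim_row P. mon_coeff (dim_col P) (\<lambda>j. P $$ (a, j)) (row_lead P a) = 1)"

lemma normalized_weak_popov_exists:
  fixes P :: "'a::field poly mat"
  assumes P: "P \<in> carrier_mat m n" and n: "0 < n" and wp: "weak_popov P"
  shows "\<exists>Q. Q \<in> carrier_mat m n \<and> normalized_weak_popov Q \<and> row_module Q = row_module P
    \<and> (\<forall>a<m. \<exists>b<m. row_lead Q a = row_lead P b)"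
proof -
  have dP: "dim_row P = m" "dim_col P = n" using P by auto
  have nz: "no_zero_row P" using wp unfolding weak_popov_def by simp
  obtain \<sigma> where \<sigma>: "bij_betw \<sigma> {..<m} {..<m}"
    and sorted: "\<And>a b. a < b \<Longrightarrow> b < m \<Longrightarrow> row_lead P (\<sigma> a) mod n < row_lead P (\<sigma> b) mod n"
    using sorting_permutation[of "\<lambda>i. row_lead P i mod n" m] wp dP unfolding weak_popov_def by auto
  have \<sigma>m: "\<sigma> a < m" if "a < m" for a using \<sigma> that by (auto simp: bij_betw_def)
  define c where "c a = 1 / mon_coeff n (\<lambda>j. P $$ (\<sigma> a, j)) (row_lead P (\<sigma> a))" for a
  have lead: "mon_coeff n (\<lambda>j. P $$ (\<sigma> a, j)) (row_lead P (\<sigma> a)) \<noteq> 0"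
    "vanishes_above n (\<lambda>j. P $$ (\<sigma> a, j)) (row_lead P (\<sigma> a))" if "a < m" for a
    using row_lead_spec[OF nz, of "\<sigma> a"] \<sigma>m[OF that] dP n by auto
  have c: "\<forall>a<m. c a \<noteq> 0" unfolding c_def using lead by simp
  define Q where "Q = perm_scale_rows m n \<sigma> c P"
  have Q: "Q \<in> carrier_mat m n" unfolding Q_def perm_scale_rows_def by simp
  have Qrow: "Q $$ (a, j) = Polynomial.smult (c a) (P $$ (\<sigma> a, j))" if "a < m" "j < n" for a j
    unfolding Q_def perm_scale_rows_def using that by simp
  have mcQ: "mon_coeff n (\<lambda>j. Q $$ (a, j)) N = c a * mon_coeff n (\<lambda>j. P $$ (\<sigma> a, j)) N" if "a < m" for a N
    using mon_coeff_cong[OF _ n, of "\<lambda>j. Q $$ (a, j)" "\<lambda>j. Polynomial.smult (c a) (P $$ (\<sigma> a, j))"]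
      Qrow[OF that] mon_coeff_smult by simp
  have leadQ: "row_lead Q a = row_lead P (\<sigma> a)" if a: "a < m" for a
    using lead_index_eqI[OF n, of "\<lambda>j. Q $$ (a, j)" "row_lead P (\<sigma> a)"] lead[OF a] c a mcQ[OF a] Q
    unfolding vanishes_above_def by simp
  have "no_zero_row Q" unfolding no_zero_row_iff
  proof (intro allI impI)
    fix a assume "a < dim_row Q"
    then have a: "a < m" using Q by simp
    then obtain j where "j < n" "P $$ (\<sigma> a, j) \<noteq> 0" using nz \<sigma>m dP unfolding no_zero_row_iff by blast
    then show "\<exists>j<dim_col Q. Q $$ (a, j) \<noteq> 0" using Qrow[OF a] c a Q by auto
  qed
  moreover have "mon_coeff (dim_col Q) (\<lambda>j. Q $$ (a, j)) (row_lead Q a) = 1" if "a < dim_row Q" for a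
    using that Q leadQ mcQ lead unfolding c_def by simp
  ultimately have "normalized_weak_popov Q" unfolding normalized_weak_popov_def using sorted Q leadQ by auto
  moreover have "row_module Q = row_module P" unfolding Q_def by (rule row_module_perm_scale_rows[OF P \<sigma> c])
  moreover have "\<forall>a<m. \<exists>b<m. row_lead Q a = row_lead P b" using leadQ \<sigma>m by blast
  ultimately show ?thesis using Q by (intro exI[of _ Q]) simp
qed

lemma normalized_weak_popov_pivots_distinct:
  assumes "normalized_weak_popov P" "a < dim_row P" "b < dim_row P" "a \<noteq> b"
  shows "row_lead P a mod dim_col P \<noteq> row_lead P b mod dim_col P"
  using assms unfolding normalized_weak_popov_def by (metis less_irrefl nat_neq_iff)

definition reduced_row :: "'a::zero poly mat \<Rightarrow> nat \<Rightarrow> bool" where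
  "reduced_row P k \<longleftrightarrow> (\<forall>i<dim_row P. i \<noteq> k \<longrightarrow>
     (\<forall>t\<ge>row_lead P i div dim_col P. coeff (P $$ (k, row_lead P i mod dim_col P)) t = 0))"

text \<open>Weighting a row by \<open>2\<^sup>N\<close> over its monomial support compares supports lexicographically from
  the top, so it decreases when the largest changed monomial is eliminated.\<close>

definition mon_weight :: "nat \<Rightarrow> (nat \<Rightarrow> 'a::zero poly) \<Rightarrow> nat" where
  "mon_weight n r = (\<Sum>N | mon_coeff n r N \<noteq> 0. 2 ^ N)"

lemma sum_pow2_less_if_agree_above:
  fixes X Y :: "nat set"
  assumes X: "finite X" and Y: "finite Y" and N0: "N0 \<in> X" "N0 \<notin> Y"
    and agree: "\<And>N. N0 < N \<Longrightarrow> N \<in> X \<longleftrightarrow> N \<in> Y"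
  shows "(\<Sum>N\<in>Y. (2::nat) ^ N) < (\<Sum>N\<in>X. 2 ^ N)"
proof -
  let ?H = "{N. N0 < N}"
  have "Y = (Y \<inter> ?H) \<union> (Y \<inter> {..<N0})" using N0(2) by (auto simp: not_less_iff_gr_or_eq)
  then have "(\<Sum>N\<in>Y. (2::nat) ^ N) = (\<Sum>N\<in>(Y \<inter> ?H) \<union> (Y \<inter> {..<N0}). 2 ^ N)"
    by (rule arg_cong)
  also have "\<dots> = (\<Sum>N\<in>Y \<inter> ?H. 2 ^ N) + (\<Sum>N\<in>Y \<inter> {..<N0}. 2 ^ N)"
    by (rule sum.union_disjoint) (use Y in auto)
  also have "(\<Sum>N\<in>Y \<inter> {..<N0}. (2::nat) ^ N) \<le> (\<Sum>N<N0. 2 ^ N)" by (rule sum_mono2) auto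
  also have "(\<Sum>N<N0. (2::nat) ^ N) < 2 ^ N0" by (induction N0) auto
  also have "Y \<inter> ?H = X \<inter> ?H" using agree by auto
  finally have "(\<Sum>N\<in>Y. (2::nat) ^ N) < (\<Sum>N\<in>insert N0 (X \<inter> ?H). 2 ^ N)" using X by simp
  also have "\<dots> \<le> (\<Sum>N\<in>X. 2 ^ N)" using X N0(1) by (intro sum_mono2) auto
  finally show ?thesis .
qed

lemma mon_weight_less:
  assumes n: "0 < n" and N0: "mon_coeff n r' N0 = 0" "mon_coeff n r N0 \<noteq> 0"
    and agree: "\<And>N. N0 < N \<Longrightarrow> mon_coeff n r' N = mon_coeff n r N"
  shows "mon_weight n r' < mon_weight n r"
  unfolding mon_weight_def
  by (rule sum_pow2_less_if_agree_above) (use finite_mon_coeff_support[OF n] N0 agree in auto)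

lemma normalized_weak_popov_replace_row:
  fixes P P' :: "'a::field poly mat"
  assumes P: "P \<in> carrier_mat m n" and P': "P' \<in> carrier_mat m n" and np: "normalized_weak_popov P"
    and n: "0 < n" and k: "k < m"
    and rows: "\<And>a j. a < m \<Longrightarrow> a \<noteq> k \<Longrightarrow> j < n \<Longrightarrow> P' $$ (a, j) = P $$ (a, j)"
    and lead: "lead_index n (\<lambda>j. P' $$ (k, j)) = lead_index n (\<lambda>j. P $$ (k, j))"
    and coeff: "mon_coeff n (\<lambda>j. P' $$ (k, j)) (lead_index n (\<lambda>j. P $$ (k, j)))
      = mon_coeff n (\<lambda>j. P $$ (k, j)) (lead_index n (\<lambda>j. P $$ (k, j)))"
  shows "normalized_weak_popov P'" and "\<And>a. a < m \<Longrightarrow> row_lead P' a = row_lead P a"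
proof -
  have dP: "dim_row P = m" "dim_col P = n" and dP': "dim_row P' = m" "dim_col P' = n" using P P' by auto
  have nz: "no_zero_row P" and one: "\<And>a. a < m \<Longrightarrow> mon_coeff n (\<lambda>j. P $$ (a, j)) (row_lead P a) = 1"
    using np dP unfolding normalized_weak_popov_def by auto
  show leads: "row_lead P' a = row_lead P a" if a: "a < m" for a
  proof (cases "a = k")
    case False
    then show ?thesis using lead_index_cong[OF _ n, of "\<lambda>j. P' $$ (a, j)" "\<lambda>j. P $$ (a, j)"] rows a dP dP' by simp
  qed (use lead dP dP' in simp)
  have monic: "mon_coeff n (\<lambda>j. P' $$ (a, j)) (row_lead P' a) = 1" if a: "a < m" for a
  proof (cases "a = k")
    case False
    then show ?thesis using one[OF a] leads[OF a] mon_coeff_cong[OF _ n, of "\<lambda>j. P' $$ (a, j)" "\<lambda>j. P $$ (a, j)"]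
      rows a dP' by simp
  qed (use one[OF k] coeff lead dP dP' in simp)
  have "no_zero_row P'" unfolding no_zero_row_iff
  proof (intro allI impI)
    fix a assume "a < dim_row P'"
    then have a: "a < m" using dP' by simp
    have "mon_coeff n (\<lambda>j. P' $$ (a, j)) (row_lead P' a) \<noteq> 0" using monic[OF a] by simp
    then have "P' $$ (a, row_lead P' a mod n) \<noteq> 0" unfolding mon_coeff_def by auto
    moreover have "row_lead P' a mod n < n" using n by simp
    ultimately show "\<exists>j<dim_col P'. P' $$ (a, j) \<noteq> 0" using dP' by auto
  qed
  then show "normalized_weak_popov P'"
    using np leads monic dP dP' unfolding normalized_weak_popov_def by auto
qed

lemma reduced_row_step:
  fixes P :: "'a::field poly mat"
  assumes P: "P \<in> carrier_mat m n" and np: "normalized_weak_popov P" and n: "0 < n"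
    and k: "k < m" and nr: "\<not> reduced_row P k"
  shows "\<exists>P'. P' \<in> carrier_mat m n \<and> normalized_weak_popov P' \<and> row_module P' = row_module P
     \<and> (\<forall>a<m. a \<noteq> k \<longrightarrow> (\<forall>j<n. P' $$ (a, j) = P $$ (a, j))) \<and> (\<forall>a<m. row_lead P' a = row_lead P a)
     \<and> mon_weight n (\<lambda>j. P' $$ (k, j)) < mon_weight n (\<lambda>j. P $$ (k, j))"
proof -
  have dP: "dim_row P = m" "dim_col P = n" using P by auto
  have nz: "no_zero_row P" using np unfolding normalized_weak_popov_def by simp
  note lead = row_lead_spec[OF nz, unfolded dP, OF _ n]
  obtain i t where i: "i < m" "i \<noteq> k" and t: "row_lead P i div n \<le> t"
    and ct: "coeff (P $$ (k, row_lead P i mod n)) t \<noteq> 0"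
    using nr dP unfolding reduced_row_def by auto
  define Li Lk where "Li = lead_index n (\<lambda>j. P $$ (i, j))" and "Lk = lead_index n (\<lambda>j. P $$ (k, j))"
  have LiLk: "row_lead P i = Li" "row_lead P k = Lk" using dP unfolding Li_def Lk_def by simp_all
  define N0 where "N0 = t * n + Li mod n"
  have "Li div n * n \<le> t * n" using t unfolding LiLk by (rule mult_right_mono) simp
  then have N0: "Li \<le> N0" "N0 mod n = Li mod n"
    using div_mult_mod_eq[of Li n] n unfolding N0_def by linarith simp
  have cN0: "mon_coeff n (\<lambda>j. P $$ (k, j)) N0 \<noteq> 0" using ct n unfolding N0_def LiLk by (simp add: mon_coeff_index)
  define p where "p = - monom (mon_coeff n (\<lambda>j. P $$ (k, j)) N0 / mon_coeff n (\<lambda>j. P $$ (i, j)) Li) (N0 div n - Li div n)"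
  note cancel = mon_coeff_cancel[OF n lead(1,2)[OF i(1), folded Li_def] N0, where s="\<lambda>j. P $$ (k, j)", folded p_def]
  define P' where "P' = addrow p k i P"
  have P': "P' \<in> carrier_mat m n" unfolding P'_def using P by simp
  have rowk: "mon_coeff n (\<lambda>j. P' $$ (k, j)) N = mon_coeff n (\<lambda>j. p * P $$ (i, j) + P $$ (k, j)) N" for N
    unfolding P'_def using i k dP n by (intro mon_coeff_cong) simp_all
  have rowa: "P' $$ (a, j) = P $$ (a, j)" if "a < m" "a \<noteq> k" "j < n" for a j
    unfolding P'_def using that dP by simp
  have agree: "mon_coeff n (\<lambda>j. P' $$ (k, j)) N = mon_coeff n (\<lambda>j. P $$ (k, j)) N" if "N0 < N" for N
    using rowk cancel(2)[OF that] by simp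
  have "N0 \<le> Lk" using lead(2)[OF k] cN0 leI unfolding vanishes_above_def Lk_def by blast
  moreover have "N0 \<noteq> Lk"
    using N0(2) normalized_weak_popov_pivots_distinct[OF np, of i k] i k dP unfolding LiLk[symmetric] by auto
  ultimately have "N0 < Lk" by simp
  note keep = lead_index_eq_if_agree_above[OF n lead(1,2)[OF k, folded Lk_def] this agree]
  note replaced = normalized_weak_popov_replace_row[OF P P' np n k rowa keep[unfolded Lk_def]]
  have "row_module P' = row_module P" unfolding P'_def using row_module_addrow[of k i P p] i k dP by simp
  moreover have "mon_weight n (\<lambda>j. P' $$ (k, j)) < mon_weight n (\<lambda>j. P $$ (k, j))"
    using mon_weight_less[OF n _ cN0 agree] rowk cancel(1) by simp
  ultimately show ?thesis using P' rowa replaced by (intro exI[of _ P']) simp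
qed

lemma reduced_row_exists:
  fixes P :: "'a::field poly mat"
  shows "P \<in> carrier_mat m n \<Longrightarrow> normalized_weak_popov P \<Longrightarrow> 0 < n \<Longrightarrow> k < m \<Longrightarrow>
    \<exists>Q. Q \<in> carrier_mat m n \<and> normalized_weak_popov Q \<and> row_module Q = row_module P
     \<and> (\<forall>a<m. a \<noteq> k \<longrightarrow> (\<forall>j<n. Q $$ (a, j) = P $$ (a, j))) \<and> (\<forall>a<m. row_lead Q a = row_lead P a)
     \<and> reduced_row Q k"
proof (induction "mon_weight n (\<lambda>j. P $$ (k, j))" arbitrary: P rule: less_induct)
  case less
  show ?case
  proof (cases "reduced_row P k")
    case True
    then show ?thesis using less.prems by (intro exI[of _ P]) simp
  next
    case False
    obtain P' where P': "P' \<in> carrier_mat m n" "normalized_weak_popov P'" "row_module P' = row_module P"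
      "\<forall>a<m. a \<noteq> k \<longrightarrow> (\<forall>j<n. P' $$ (a, j) = P $$ (a, j))" "\<forall>a<m. row_lead P' a = row_lead P a"
      "mon_weight n (\<lambda>j. P' $$ (k, j)) < mon_weight n (\<lambda>j. P $$ (k, j))"
      using reduced_row_step[OF less.prems(1,2,3,4) False] by blast
    obtain Q where Q: "Q \<in> carrier_mat m n" "normalized_weak_popov Q" "row_module Q = row_module P'"
      "\<forall>a<m. a \<noteq> k \<longrightarrow> (\<forall>j<n. Q $$ (a, j) = P' $$ (a, j))" "\<forall>a<m. row_lead Q a = row_lead P' a"
      "reduced_row Q k"
      using less.hyps[OF P'(6) P'(1,2) less.prems(3,4)] by blast
    show ?thesis using Q P' by (intro exI[of _ Q]) simp
  qed
qed

lemma reduced_row_cong: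
  assumes "dim_row Q = dim_row P" "dim_col Q = dim_col P" and n: "0 < dim_col P"
    and same_row: "\<And>j. j < dim_col P \<Longrightarrow> Q $$ (k, j) = P $$ (k, j)"
    and same_leads: "\<And>a. a < dim_row P \<Longrightarrow> row_lead Q a = row_lead P a"
    and "reduced_row P k"
  shows "reduced_row Q k"
  using assms unfolding reduced_row_def by (metis mod_less_divisor)

lemma all_rows_reduced_exists:
  fixes P :: "'a::field poly mat"
  assumes P: "P \<in> carrier_mat m n" "normalized_weak_popov P" and n: "0 < n"
  shows "s \<le> m \<Longrightarrow> \<exists>Q. Q \<in> carrier_mat m n \<and> normalized_weak_popov Q \<and> row_module Q = row_module P
     \<and> (\<forall>a<m. row_lead Q a = row_lead P a) \<and> (\<forall>k<s. reduced_row Q k)"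
proof (induction s)
  case 0
  then show ?case using P by (intro exI[of _ P]) simp
next
  case (Suc s)
  then obtain Q where Q: "Q \<in> carrier_mat m n" "normalized_weak_popov Q" "row_module Q = row_module P"
    "\<forall>a<m. row_lead Q a = row_lead P a" "\<forall>k<s. reduced_row Q k" by auto
  have s: "s < m" using Suc.prems by simp
  obtain Q' where Q': "Q' \<in> carrier_mat m n" "normalized_weak_popov Q'" "row_module Q' = row_module Q"
    "\<forall>a<m. a \<noteq> s \<longrightarrow> (\<forall>j<n. Q' $$ (a, j) = Q $$ (a, j))" "\<forall>a<m. row_lead Q' a = row_lead Q a"
    "reduced_row Q' s"
    using reduced_row_exists[OF Q(1,2) n s] by blast
  have "reduced_row Q' k" if k: "k < Suc s" for k
  proof (cases "k = s")
    case False
    then show ?thesis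
      using reduced_row_cong[of Q' Q k] Q(1,5) Q'(1,4,5) k s n by simp
  qed (use Q'(6) in simp)
  then show ?case using Q Q' by (intro exI[of _ Q']) simp
qed

lemma normalized_weak_popov_reduced_is_popov:
  fixes Q :: "'a::field poly mat"
  assumes np: "normalized_weak_popov Q" and n: "0 < dim_col Q" and red: "\<And>k. k < dim_row Q \<Longrightarrow> reduced_row Q k"
  shows "is_popov Q"
proof -
  let ?n = "dim_col Q"
  have nz: "no_zero_row Q" and inc: "\<And>a b. a < b \<Longrightarrow> b < dim_row Q \<Longrightarrow> row_lead Q a mod ?n < row_lead Q b mod ?n"
    and one: "\<And>a. a < dim_row Q \<Longrightarrow> mon_coeff ?n (\<lambda>j. Q $$ (a, j)) (row_lead Q a) = 1"
    using np unfolding normalized_weak_popov_def by auto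
  note lead = row_lead_spec[OF nz _ n]
  have piv: "pivot_index Q a = row_lead Q a mod ?n"
    and deg: "degree (Q $$ (a, row_lead Q a mod ?n)) = row_lead Q a div ?n" if a: "a < dim_row Q" for a
    using row_deg_pivot_index_eq[OF n lead[OF a]] degree_at_lead_position[OF n lead[OF a]] by simp_all
  show ?thesis unfolding is_popov_def
  proof (intro conjI allI impI)
    show "no_zero_row Q" by (rule nz)
  next
    fix i i' assume "i < i' \<and> i' < dim_row Q"
    then show "pivot_index Q i < pivot_index Q i'" using inc piv by simp
  next
    fix i assume i: "i < dim_row Q"
    show "lead_coeff (Q $$ (i, pivot_index Q i)) = 1"
      using one[OF i] piv[OF i] deg[OF i] unfolding mon_coeff_def by simp
  next
    fix i k assume i: "i < dim_row Q" and k: "k < dim_row Q" and ki: "k \<noteq> i"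
    have "\<forall>t\<ge>degree (Q $$ (i, pivot_index Q i)). coeff (Q $$ (k, pivot_index Q i)) t = 0"
      using red[OF k] i ki piv[OF i] deg[OF i] unfolding reduced_row_def by simp
    then show "Q $$ (k, pivot_index Q i) = 0 \<or> degree (Q $$ (k, pivot_index Q i)) < degree (Q $$ (i, pivot_index Q i))"
      by (metis leading_coeff_0_iff not_le)
  qed
qed

lemma popov_exists:
  fixes A :: "'a::field poly mat"
  assumes A: "A \<in> carrier_mat m n" and n: "0 < n" and fr: "full_row_rank A"
  shows "\<exists>P. P \<in> carrier_mat m n \<and> is_popov P \<and> row_module P = row_module A \<and> mat_deg P \<le> mat_deg A"
proof -
  obtain Q1 where Q1: "Q1 \<in> carrier_mat m n" "weak_popov Q1" "row_module Q1 = row_module A"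
    "\<forall>a<m. row_lead Q1 a \<le> row_lead A a"
    using weak_popov_exists[OF A n fr] by blast
  obtain Q2 where Q2: "Q2 \<in> carrier_mat m n" "normalized_weak_popov Q2" "row_module Q2 = row_module Q1"
    "\<forall>a<m. \<exists>b<m. row_lead Q2 a = row_lead Q1 b"
    using normalized_weak_popov_exists[OF Q1(1) n Q1(2)] by blast
  obtain Q3 where Q3: "Q3 \<in> carrier_mat m n" "normalized_weak_popov Q3" "row_module Q3 = row_module Q2"
    "\<forall>a<m. row_lead Q3 a = row_lead Q2 a" "\<forall>k<m. reduced_row Q3 k"
    using all_rows_reduced_exists[OF Q2(1,2) n, of m] by blast
  have "is_popov Q3" using normalized_weak_popov_reduced_is_popov[OF Q3(2)] Q3(1,5) n by simp
  moreover have "mat_deg Q3 \<le> mat_deg A"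
  proof (rule mat_deg_le_if_row_leads_le)
    show "no_zero_row Q3" using Q3(2) unfolding normalized_weak_popov_def by simp
    fix a assume "a < dim_row Q3"
    then obtain b where b: "b < m" "row_lead Q3 a = row_lead Q1 b" using Q3(1,4) Q2(4) by auto
    have "row_lead A b div n \<le> mat_deg A"
      using row_lead_div_le_mat_deg[OF full_row_rank_no_zero_row[OF fr], of b] A b n by simp
    then show "row_lead Q3 a div dim_col Q3 \<le> mat_deg A"
      using b Q1(4) Q1(1) Q3(1) A div_le_mono[of "row_lead Q1 b" "row_lead A b" n] by simp
  qed (use Q3(1) n in simp)
  ultimately show ?thesis using Q3 Q2 Q1 by (intro exI[of _ Q3]) simp
qed

subsection \<open>Uniqueness of the Popov form\<close>

lemma popov_row_leads:
  fixes P :: "'a::field poly mat"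
  assumes pop: "is_popov P" and n: "0 < dim_col P"
  shows "\<And>a. a < dim_row P \<Longrightarrow> mon_coeff (dim_col P) (\<lambda>j. P $$ (a, j)) (row_lead P a) \<noteq> 0"
    and "\<And>a. a < dim_row P \<Longrightarrow> vanishes_above (dim_col P) (\<lambda>j. P $$ (a, j)) (row_lead P a)"
    and "\<And>a. a < dim_row P \<Longrightarrow> row_deg P a = row_lead P a div dim_col P"
    and "\<And>a. a < dim_row P \<Longrightarrow> pivot_index P a = row_lead P a mod dim_col P"
    and "\<And>a b. a < b \<Longrightarrow> b < dim_row P \<Longrightarrow> row_lead P a mod dim_col P < row_lead P b mod dim_col P"
proof -
  have nz: "no_zero_row P" using pop unfolding is_popov_def by simp
  show lead: "mon_coeff (dim_col P) (\<lambda>j. P $$ (a, j)) (row_lead P a) \<noteq> 0"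
    "vanishes_above (dim_col P) (\<lambda>j. P $$ (a, j)) (row_lead P a)" if "a < dim_row P" for a
    using row_lead_spec[OF nz that n] by simp_all
  show "row_deg P a = row_lead P a div dim_col P" "pivot_index P a = row_lead P a mod dim_col P"
    if "a < dim_row P" for a
    using row_deg_pivot_index_eq[OF n lead[OF that]] by simp_all
  then show "row_lead P a mod dim_col P < row_lead P b mod dim_col P" if "a < b" "b < dim_row P" for a b
    using pop that unfolding is_popov_def by (metis order.strict_trans)
qed

lemma popov_pivot_column_coeff:
  fixes P :: "'a::field poly mat"
  assumes pop: "is_popov P" and n: "0 < dim_col P"
    and a: "a < dim_row P" and b: "b < dim_row P" and t: "row_lead P a div dim_col P \<le> t"
  shows "coeff (P $$ (b, row_lead P a mod dim_col P)) t = (if b = a \<and> t = row_lead P a div dim_col P then 1 else 0)"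
proof -
  let ?j = "row_lead P a mod dim_col P" and ?d = "row_lead P a div dim_col P"
  note F = popov_row_leads[OF pop n]
  have dg: "degree (P $$ (a, ?j)) = ?d" using degree_at_lead_position[OF n F(1,2)[OF a]] by simp
  have lc: "lead_coeff (P $$ (a, ?j)) = 1" using pop a F(4)[OF a] unfolding is_popov_def by auto
  show ?thesis
  proof (cases "b = a")
    case True
    then show ?thesis using lc dg t by (cases "t = ?d") (auto simp: coeff_eq_0)
  next
    case False
    then have "P $$ (b, ?j) = 0 \<or> degree (P $$ (b, ?j)) < ?d"
      using pop a b F(4)[OF a] dg unfolding is_popov_def by metis
    then show ?thesis using False t by (auto simp: coeff_eq_0)
  qed
qed

lemma vanishes_above_sum:
  "(\<And>i. i \<in> I \<Longrightarrow> vanishes_above n (F i) M) \<Longrightarrow> vanishes_above n (\<lambda>j. \<Sum>i\<in>I. F i j) M"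
  unfolding vanishes_above_def mon_coeff_sum by simp

lemma predictable_lead_index:
  fixes R :: "nat \<Rightarrow> nat \<Rightarrow> 'a::field poly"
  assumes n: "0 < n" and R: "\<And>i. i < k \<Longrightarrow> mon_coeff n (R i) (L i) \<noteq> 0" "\<And>i. i < k \<Longrightarrow> vanishes_above n (R i) (L i)"
    and pos: "inj_on (\<lambda>i. L i mod n) {..<k}" and u: "\<exists>i<k. u i \<noteq> 0"
  shows "\<exists>i<k. u i \<noteq> 0 \<and> mon_coeff n (\<lambda>j. \<Sum>i'<k. u i' * R i' j) (L i + n * degree (u i)) \<noteq> 0
    \<and> lead_index n (\<lambda>j. \<Sum>i'<k. u i' * R i' j) = L i + n * degree (u i)"
proof -
  define S where "S = {i. i < k \<and> u i \<noteq> 0}"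
  define f where "f i = L i + n * degree (u i)" for i
  have S: "finite S" "S \<noteq> {}" unfolding S_def using u by auto
  have "Max (f ` S) \<in> f ` S" using S by simp
  then obtain i0 where i0: "i0 \<in> S" "f i0 = Max (f ` S)" by auto
  have le: "f i \<le> f i0" if "i \<in> S" for i using i0 S that by simp
  have lt: "f i < f i0" if "i \<in> S" "i \<noteq> i0" for i
  proof -
    have "L i mod n \<noteq> L i0 mod n" using pos that i0(1) unfolding S_def inj_on_def by auto
    then have "f i mod n \<noteq> f i0 mod n" unfolding f_def by simp
    then have "f i \<noteq> f i0" by auto
    then show ?thesis using le[OF that(1)] by simp
  qed
  have summand: "vanishes_above n (\<lambda>j. u i * R i j) (f i)"
    "mon_coeff n (\<lambda>j. u i * R i j) (f i) = lead_coeff (u i) * mon_coeff n (R i) (L i)" if "i < k" for i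
    using vanishes_above_mult[OF n R(2)[OF that]] mon_coeff_mult_lead[OF n R(2)[OF that]] unfolding f_def by auto
  have zero: "mon_coeff n (\<lambda>j. u i * R i j) N = 0" if "i \<notin> S" "i < k" for i N
    using that unfolding S_def mon_coeff_def by simp
  have "vanishes_above n (\<lambda>j. \<Sum>i<k. u i * R i j) (f i0)"
  proof (rule vanishes_above_sum)
    fix i assume "i \<in> {..<k}"
    then show "vanishes_above n (\<lambda>j. u i * R i j) (f i0)"
      using summand(1)[of i] le[of i] zero[of i] unfolding vanishes_above_def by (cases "i \<in> S") auto
  qed
  moreover have "mon_coeff n (\<lambda>j. \<Sum>i<k. u i * R i j) (f i0) = lead_coeff (u i0) * mon_coeff n (R i0) (L i0)"
  proof -
    have "mon_coeff n (\<lambda>j. u i * R i j) (f i0) = 0" if "i < k" "i \<noteq> i0" for i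
      using summand(1)[OF that(1)] lt[of i] zero[of i] that unfolding vanishes_above_def by (cases "i \<in> S") auto
    then have "(\<Sum>i<k. mon_coeff n (\<lambda>j. u i * R i j) (f i0)) = mon_coeff n (\<lambda>j. u i0 * R i0 j) (f i0)"
      using i0(1) unfolding S_def by (subst sum.mono_neutral_left[symmetric, of "{..<k}" "{i0}"]) auto
    then show ?thesis using summand(2) i0(1) unfolding S_def mon_coeff_sum by simp
  qed
  moreover have "lead_coeff (u i0) * mon_coeff n (R i0) (L i0) \<noteq> 0" using i0(1) R(1) unfolding S_def by simp
  ultimately have "mon_coeff n (\<lambda>j. \<Sum>i<k. u i * R i j) (f i0) \<noteq> 0"
    "lead_index n (\<lambda>j. \<Sum>i<k. u i * R i j) = f i0"
    using lead_index_eqI[OF n, of "\<lambda>j. \<Sum>i<k. u i * R i j" "f i0"] by auto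
  then show ?thesis using i0(1) unfolding S_def f_def by blast
qed

lemma lead_index_popov_combination:
  fixes P :: "'a::field poly mat"
  assumes pop: "is_popov P" and n: "0 < dim_col P"
    and v: "\<And>j. j < dim_col P \<Longrightarrow> v j = (\<Sum>a<dim_row P. P $$ (a, j) * u a)" and u: "\<exists>a<dim_row P. u a \<noteq> 0"
  shows "\<exists>a<dim_row P. u a \<noteq> 0 \<and> mon_coeff (dim_col P) v (row_lead P a + dim_col P * degree (u a)) \<noteq> 0
     \<and> lead_index (dim_col P) v = row_lead P a + dim_col P * degree (u a)"
proof -
  note F = popov_row_leads[OF pop n]
  have "inj_on (\<lambda>a. row_lead P a mod dim_col P) {..<dim_row P}"
  proof (rule inj_onI)
    fix a b assume "a \<in> {..<dim_row P}" "b \<in> {..<dim_row P}"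
      and "row_lead P a mod dim_col P = row_lead P b mod dim_col P"
    then show "a = b" using F(5)[of a b] F(5)[of b a] by (cases a b rule: linorder_cases) auto
  qed
  then obtain a where "a < dim_row P" "u a \<noteq> 0"
    and "mon_coeff (dim_col P) (\<lambda>j. \<Sum>i<dim_row P. u i * P $$ (i, j)) (row_lead P a + dim_col P * degree (u a)) \<noteq> 0"
    and "lead_index (dim_col P) (\<lambda>j. \<Sum>i<dim_row P. u i * P $$ (i, j)) = row_lead P a + dim_col P * degree (u a)"
    using predictable_lead_index[OF n, of "dim_row P" "\<lambda>i j. P $$ (i, j)" "row_lead P" u] F(1,2) u by blast
  moreover have "\<And>j. j < dim_col P \<Longrightarrow> v j = (\<Sum>i<dim_row P. u i * P $$ (i, j))"
    using v by (simp add: mult.commute)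
  ultimately show ?thesis
    using mon_coeff_cong[OF _ n, of v "\<lambda>j. \<Sum>i<dim_row P. u i * P $$ (i, j)"]
      lead_index_cong[OF _ n, of v "\<lambda>j. \<Sum>i<dim_row P. u i * P $$ (i, j)"] by auto
qed

lemma popov_row_lead_dominated:
  fixes P Q :: "'a::field poly mat"
  assumes popP: "is_popov P" and popQ: "is_popov Q" and cols: "dim_col Q = dim_col P" and n: "0 < dim_col P"
    and sub: "row_module Q \<subseteq> row_module P" and b: "b < dim_row Q"
  shows "\<exists>a<dim_row P. row_lead Q b mod dim_col P = row_lead P a mod dim_col P
    \<and> row_lead P a div dim_col P \<le> row_lead Q b div dim_col P"
proof -
  obtain u where u: "\<forall>j<dim_col P. Q $$ (b, j) = (\<Sum>a<dim_row P. P $$ (a, j) * u a)"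
    using row_combination_of_subset[OF sub b cols] by blast
  have "\<exists>a<dim_row P. u a \<noteq> 0"
  proof (rule ccontr)
    assume "\<not> ?thesis"
    then have "zero_row Q b" using u cols unfolding zero_row_def by simp
    then show False using popQ b unfolding is_popov_def no_zero_row_def by blast
  qed
  then obtain a where "a < dim_row P" and "row_lead Q b = row_lead P a + dim_col P * degree (u a)"
    using lead_index_popov_combination[OF popP n, of "\<lambda>j. Q $$ (b, j)" u] u cols by auto
  then show ?thesis using n by auto
qed

lemma strict_mono_image_eq:
  fixes f g :: "nat \<Rightarrow> 'b::linorder"
  assumes f: "\<And>a b. a < b \<Longrightarrow> b < k \<Longrightarrow> f a < f b" and g: "\<And>a b. a < b \<Longrightarrow> b < l \<Longrightarrow> g a < g b"
    and im: "f ` {..<k} = g ` {..<l}"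
  shows "k = l \<and> (\<forall>a<k. f a = g a)"
proof -
  have "sorted_wrt (<) (map f [0..<k])" "sorted_wrt (<) (map g [0..<l])"
    unfolding sorted_wrt_iff_nth_less using f g by simp_all
  moreover have "set (map f [0..<k]) = set (map g [0..<l])" using im by (simp add: atLeast0LessThan)
  ultimately have "map f [0..<k] = map g [0..<l]" using strict_sorted_equal by blast
  then have "length (map f [0..<k]) = length (map g [0..<l])"
    and "\<forall>a<k. map f [0..<k] ! a = map g [0..<l] ! a" by simp_all
  then show ?thesis by simp
qed

lemma popov_same_row_leads:
  fixes P Q :: "'a::field poly mat"
  assumes popP: "is_popov P" and popQ: "is_popov Q" and cols: "dim_col Q = dim_col P" and n: "0 < dim_col P"
    and eq: "row_module Q = row_module P"
  shows "dim_row Q = dim_row P" and "\<And>a. a < dim_row P \<Longrightarrow> row_lead Q a = row_lead P a"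
proof -
  let ?n = "dim_col P" and ?k = "dim_row P" and ?l = "dim_row Q"
  note FP = popov_row_leads[OF popP n] and FQ = popov_row_leads[OF popQ n[folded cols]]
  have QP: "\<exists>a<?k. row_lead Q b mod ?n = row_lead P a mod ?n \<and> row_lead P a div ?n \<le> row_lead Q b div ?n"
    if "b < ?l" for b
    using popov_row_lead_dominated[OF popP popQ cols n] eq that by simp
  have PQ: "\<exists>b<?l. row_lead P a mod ?n = row_lead Q b mod ?n \<and> row_lead Q b div ?n \<le> row_lead P a div ?n"
    if "a < ?k" for a
    using popov_row_lead_dominated[OF popQ popP cols[symmetric] n[folded cols]] eq that cols by simp
  have "(\<lambda>a. row_lead P a mod ?n) ` {..<?k} = (\<lambda>b. row_lead Q b mod dim_col Q) ` {..<?l}"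
    using QP PQ cols by (auto simp: image_def)
  from strict_mono_image_eq[OF FP(5) FQ(5) this]
  have same: "?l = ?k" "\<And>a. a < ?k \<Longrightarrow> row_lead P a mod ?n = row_lead Q a mod ?n" using cols by auto
  show "?l = ?k" using same(1) by simp
  have inj: "a = b" if "a < ?k" "b < ?k" "row_lead P a mod ?n = row_lead P b mod ?n" for a b
    using FP(5)[of a b] FP(5)[of b a] that by (cases a b rule: linorder_cases) auto
  have injQ: "a = b" if "a < ?k" "b < ?k" "row_lead Q a mod ?n = row_lead Q b mod ?n" for a b
    using FQ(5)[of a b] FQ(5)[of b a] that same(1) cols by (cases a b rule: linorder_cases) auto
  show "row_lead Q a = row_lead P a" if a: "a < ?k" for a
  proof -
    obtain a' where a': "a' < ?k" "row_lead Q a mod ?n = row_lead P a' mod ?n"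
      "row_lead P a' div ?n \<le> row_lead Q a div ?n"
      using QP[of a] a same(1) by auto
    obtain b' where b': "b' < ?l" "row_lead P a mod ?n = row_lead Q b' mod ?n"
      "row_lead Q b' div ?n \<le> row_lead P a div ?n"
      using PQ[OF a] by auto
    have "row_lead P a' mod ?n = row_lead P a mod ?n" using a'(2) same(2)[OF a] by simp
    then have "a' = a" using inj[OF a'(1) a] by simp
    have "row_lead Q b' mod ?n = row_lead Q a mod ?n" using b'(2) same(2)[OF a] by simp
    then have "b' = a" using injQ[of b' a] b'(1) a same(1) by simp
    have div: "row_lead Q a div ?n = row_lead P a div ?n"
      using a'(3) b'(3) \<open>a' = a\<close> \<open>b' = a\<close> by simp
    have "row_lead Q a = row_lead Q a div ?n * ?n + row_lead Q a mod ?n" by simp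
    also have "\<dots> = row_lead P a div ?n * ?n + row_lead P a mod ?n" using div same(2)[OF a] by simp
    finally show ?thesis by simp
  qed
qed

lemma popov_unique:
  fixes P Q :: "'a::field poly mat"
  assumes popP: "is_popov P" and popQ: "is_popov Q" and cols: "dim_col Q = dim_col P" and n: "0 < dim_col P"
    and eq: "row_module Q = row_module P"
  shows "Q = P"
proof -
  let ?n = "dim_col P" and ?k = "dim_row P"
  note rows = popov_same_row_leads[OF popP popQ cols n eq]
  have coeff_eq: "coeff (Q $$ (b, row_lead P a mod ?n)) t = coeff (P $$ (b, row_lead P a mod ?n)) t"
    if "a < ?k" "b < ?k" "row_lead P a div ?n \<le> t" for a b t
    using popov_pivot_column_coeff[OF popP n that] popov_pivot_column_coeff[OF popQ n[folded cols], of a b t]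
      rows that cols by simp
  have "Q $$ (b, j) = P $$ (b, j)" if b: "b < ?k" and j: "j < ?n" for b j
  proof -
    obtain u where u: "\<forall>j<?n. Q $$ (b, j) = (\<Sum>a<?k. P $$ (a, j) * u a)"
      using row_combination_of_subset[of Q P b] eq b rows(1) cols by auto
    define w where "w a = u a - (if a = b then 1 else 0)" for a
    have diff: "Q $$ (b, j) - P $$ (b, j) = (\<Sum>a<?k. P $$ (a, j) * w a)" if "j < ?n" for j
      using u that sum_mult_delta[OF b, of "\<lambda>a. P $$ (a, j)" 1]
      unfolding w_def by (simp add: right_diff_distrib sum_subtractf)
    show ?thesis
    proof (rule ccontr)
      assume ne: "Q $$ (b, j) \<noteq> P $$ (b, j)"
      have "\<exists>a<?k. w a \<noteq> 0"
      proof (rule ccontr)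
        assume "\<not> (\<exists>a<?k. w a \<noteq> 0)"
        then have "(\<Sum>a<?k. P $$ (a, j) * w a) = 0" by simp
        then show False using ne diff[OF j] by simp
      qed
      then obtain a where a: "a < ?k"
        and nz: "mon_coeff ?n (\<lambda>j. Q $$ (b, j) - P $$ (b, j)) (row_lead P a + ?n * degree (w a)) \<noteq> 0"
        using lead_index_popov_combination[OF popP n diff] by blast
      define N where "N = row_lead P a + ?n * degree (w a)"
      have "N mod ?n = row_lead P a mod ?n" "row_lead P a div ?n \<le> N div ?n" unfolding N_def using n by simp_all
      then have "mon_coeff ?n (\<lambda>j. Q $$ (b, j) - P $$ (b, j)) N = 0"
        using coeff_eq[OF a b] unfolding mon_coeff_def by (simp add: coeff_diff)
      then show False using nz unfolding N_def by simp
    qed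
  qed
  then show "Q = P" using rows(1) cols by (intro eq_matI) auto
qed

lemma popov_form_spec:
  fixes A :: "'a::field poly mat"
  assumes A: "A \<in> carrier_mat m n" and n: "0 < n" and fr: "full_row_rank A"
  shows "popov_form A \<in> carrier_mat m n" and "is_popov (popov_form A)" and "mat_deg (popov_form A) \<le> mat_deg A"
proof -
  obtain P where P: "P \<in> carrier_mat m n" "is_popov P" "row_module P = row_module A" "mat_deg P \<le> mat_deg A"
    using popov_exists[OF A n fr] by blast
  have "popov_form A = P" unfolding popov_form_def
  proof (rule the_equality)
    show "dim_col P = dim_col A \<and> is_popov P \<and> row_module P = row_module A" using P A by auto
    show "Q = P" if "dim_col Q = dim_col A \<and> is_popov Q \<and> row_module Q = row_module A" for Q
      using popov_unique[OF P(2), of Q] that P A n by auto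
  qed
  then show "popov_form A \<in> carrier_mat m n" "is_popov (popov_form A)" "mat_deg (popov_form A) \<le> mat_deg A"
    using P by simp_all
qed

subsection \<open>Completions from leading matrices\<close>

lemma indep_rows_if_echelon:
  fixes R :: "nat \<Rightarrow> nat \<Rightarrow> 'a::idom"
  assumes inc: "\<And>a b. a < b \<Longrightarrow> b < s \<Longrightarrow> \<pi> a < \<pi> b" and pn: "\<And>a. a < s \<Longrightarrow> \<pi> a < n"
    and piv: "\<And>a. a < s \<Longrightarrow> R a (\<pi> a) \<noteq> 0" and right: "\<And>a j. a < s \<Longrightarrow> \<pi> a < j \<Longrightarrow> j < n \<Longrightarrow> R a j = 0"
  shows "indep_rows s n R"
  unfolding indep_rows_def
proof (intro allI impI)
  fix u b assume h: "\<forall>j<n. (\<Sum>b<s. R b j * u b) = 0" and b: "b < s"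
  show "u b = 0"
  proof (rule ccontr)
    assume "u b \<noteq> 0"
    define T where "T = {a. a < s \<and> u a \<noteq> 0}"
    have T: "finite T" "T \<noteq> {}" unfolding T_def using b \<open>u b \<noteq> 0\<close> by auto
    define a0 where "a0 = Max T"
    have a0: "a0 < s" "u a0 \<noteq> 0" using Max_in[OF T] unfolding a0_def T_def by auto
    \<comment> \<open>in the pivot column of the last row with a nonzero coefficient, only that row contributes\<close>
    have "R a (\<pi> a0) * u a = 0" if "a < s" "a \<noteq> a0" for a
    proof (cases "a < a0")
      case True
      then show ?thesis using right[OF that(1) inc[OF True a0(1)] pn[OF a0(1)]] by simp
    next
      case False
      then have "a \<notin> T" using that Max_ge[OF T(1)] unfolding a0_def by fastforce
      then show ?thesis using that unfolding T_def by simp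
    qed
    then have "(\<Sum>a<s. R a (\<pi> a0) * u a) = R a0 (\<pi> a0) * u a0"
      using a0(1) by (subst sum.mono_neutral_left[symmetric, of "{..<s}" "{a0}"]) auto
    then show False using h pn[OF a0(1)] piv[OF a0(1)] a0(2) by simp
  qed
qed

lemma popov_lead_mat_full_row_rank:
  fixes P :: "'a::field poly mat"
  assumes pop: "is_popov P" and n: "0 < dim_col P"
  shows "full_row_rank (lead_mat P)"
proof -
  let ?n = "dim_col P"
  note F = popov_row_leads[OF pop n]
  have lm: "lead_mat P $$ (a, j) = mon_coeff ?n (\<lambda>j. P $$ (a, j)) (row_lead P a div ?n * ?n + j)"
    if "a < dim_row P" "j < ?n" for a j
    unfolding lead_mat_def using that F(3) by (simp add: mon_coeff_index)
  have "indep_rows (dim_row P) ?n (\<lambda>a j. lead_mat P $$ (a, j))"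
  proof (rule indep_rows_if_echelon[where \<pi> = "\<lambda>a. row_lead P a mod ?n"])
    show "lead_mat P $$ (a, row_lead P a mod ?n) \<noteq> 0" if "a < dim_row P" for a
      using lm[OF that] F(1)[OF that] n by simp
    show "lead_mat P $$ (a, j) = 0" if "a < dim_row P" "row_lead P a mod ?n < j" "j < ?n" for a j
    proof -
      have "row_lead P a < row_lead P a div ?n * ?n + j" using that(2) div_mult_mod_eq[of "row_lead P a" ?n] by linarith
      then show ?thesis using lm[OF that(1,3)] F(2)[OF that(1)] unfolding vanishes_above_def by simp
    qed
  qed (use F(5) n in simp_all)
  then show ?thesis unfolding full_row_rank_iff_indep_rows lead_mat_def by simp
qed

lemma append_rows_index:
  assumes "A \<in> carrier_mat nr1 nc" and "B \<in> carrier_mat nr2 nc" and "i < nr1 + nr2" and "j < nc"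
  shows "(A @\<^sub>r B) $$ (i, j) = (if i < nr1 then A $$ (i, j) else B $$ (i - nr1, j))"
  unfolding append_rows_def using assms by (subst index_mat_four_block) auto

lemma full_row_rank_append_rows_iff:
  assumes "A \<in> carrier_mat nr1 nc" and "B \<in> carrier_mat nr2 nc"
  shows "full_row_rank (A @\<^sub>r B) \<longleftrightarrow>
    indep_rows (nr1 + nr2) nc (\<lambda>b j. if b < nr1 then A $$ (b, j) else B $$ (b - nr1, j))"
proof -
  have "dim_row (A @\<^sub>r B) = nr1 + nr2" "dim_col (A @\<^sub>r B) = nc"
    using carrier_append_rows[OF assms] by auto
  then show ?thesis unfolding full_row_rank_iff_indep_rows
    by (auto intro!: indep_rows_cong simp: append_rows_index[OF assms])
qed

lemma row_deg_cong:
  assumes "dim_col M' = dim_col M" and "\<And>j. j < dim_col M \<Longrightarrow> M' $$ (i', j) = M $$ (i, j)"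
  shows "row_deg M' i' = row_deg M i"
proof -
  have "{degree (M' $$ (i', j)) |j. j < dim_col M'} = {degree (M $$ (i, j)) |j. j < dim_col M}"
    using assms by force
  then show ?thesis unfolding row_deg_def by simp
qed

lemma lead_mat_append_rows:
  fixes P C :: "'a::zero poly mat"
  assumes P: "P \<in> carrier_mat m n" and C: "C \<in> carrier_mat k n"
  shows "lead_mat (P @\<^sub>r C) = lead_mat P @\<^sub>r lead_mat C"
proof -
  have lP: "lead_mat P \<in> carrier_mat m n" and lC: "lead_mat C \<in> carrier_mat k n"
    using P C unfolding lead_mat_def by auto
  have PC: "P @\<^sub>r C \<in> carrier_mat (m + k) n" using P C by simp
  have rd: "row_deg (P @\<^sub>r C) i = (if i < m then row_deg P i else row_deg C (i - m))" if i: "i < m + k" for i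
  proof (cases "i < m")
    case True
    then show ?thesis using row_deg_cong[of "P @\<^sub>r C" P i i] P PC append_rows_index[OF P C i] by simp
  next
    case False
    then show ?thesis using row_deg_cong[of "P @\<^sub>r C" C i "i - m"] C PC append_rows_index[OF P C i] by simp
  qed
  have lPC: "lead_mat P @\<^sub>r lead_mat C \<in> carrier_mat (m + k) n" using lP lC by simp
  show ?thesis
  proof (rule eq_matI)
    fix i j assume "i < dim_row (lead_mat P @\<^sub>r lead_mat C)" "j < dim_col (lead_mat P @\<^sub>r lead_mat C)"
    then have i: "i < m + k" and j: "j < n" using lPC by auto
    show "lead_mat (P @\<^sub>r C) $$ (i, j) = (lead_mat P @\<^sub>r lead_mat C) $$ (i, j)"
      using append_rows_index[OF lP lC i j] append_rows_index[OF P C i j] rd[OF i]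
        carrier_matD[OF PC] P C i j
      unfolding lead_mat_def by simp
  qed (use lPC PC in \<open>auto simp: lead_mat_def\<close>)
qed

lemma row_deg_xpow_smult:
  assumes "i < dim_row L" and "j < dim_col L" and "L $$ (i, j) \<noteq> 0"
  shows "row_deg (xpow_smult d L) i = d"
  unfolding row_deg_def xpow_smult_def
proof (rule Max_eqI)
  show "d \<in> {degree (map_mat (\<lambda>c. monom c d) L $$ (i, j)) |j. j < dim_col (map_mat (\<lambda>c. monom c d) L)} \<union> {0}"
    using assms by (force simp: degree_monom_eq)
qed (use assms(1) in \<open>auto simp: degree_monom_le\<close>)

lemma no_zero_row_append_rows:
  assumes A: "A \<in> carrier_mat nr1 nc" and B: "B \<in> carrier_mat nr2 nc"
    and "no_zero_row A" and "no_zero_row B"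
  shows "no_zero_row (A @\<^sub>r B)"
  unfolding no_zero_row_iff
proof (intro allI impI)
  fix i assume "i < dim_row (A @\<^sub>r B)"
  then have i: "i < nr1 + nr2" using carrier_append_rows[OF A B] by simp
  have d: "dim_col (A @\<^sub>r B) = nc" using carrier_append_rows[OF A B] by simp
  show "\<exists>j<dim_col (A @\<^sub>r B). (A @\<^sub>r B) $$ (i, j) \<noteq> 0"
  proof (cases "i < nr1")
    case True
    then obtain j where "j < nc" "A $$ (i, j) \<noteq> 0" using A assms(3) unfolding no_zero_row_iff by auto
    then show ?thesis using append_rows_index[OF A B i] True d by auto
  next
    case False
    then have "i - nr1 < nr2" using i by simp
    then obtain j where "j < nc" "B $$ (i - nr1, j) \<noteq> 0" using B assms(4) unfolding no_zero_row_iff by auto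
    then show ?thesis using append_rows_index[OF A B i] False d by auto
  qed
qed

lemma completion_if_lead_rows_full_rank:
  fixes A :: "'a::field poly mat" and L :: "'a mat"
  assumes A: "A \<in> carrier_mat m n" and mn: "m < n" and fr: "full_row_rank A"
    and L: "L \<in> carrier_mat (n - m) n" and ind: "full_row_rank (lead_mat (popov_form A) @\<^sub>r L)"
  shows "is_completion A (xpow_smult (mat_deg A + 1) L)"
proof -
  define P where "P = popov_form A"
  define C where "C = xpow_smult (mat_deg A + 1) L"
  have n: "0 < n" using mn by simp
  note P = popov_form_spec[OF A n fr, folded P_def]
  have lP: "lead_mat P \<in> carrier_mat m n" using P(1) unfolding lead_mat_def by auto
  have C: "C \<in> carrier_mat (n - m) n" unfolding C_def xpow_smult_def using L by auto
  have Cij: "C $$ (i, j) = monom (L $$ (i, j)) (mat_deg A + 1)" if "i < n - m" "j < n" for i j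
    unfolding C_def xpow_smult_def using L that by simp
  have Lrow: "\<exists>j<n. L $$ (i, j) \<noteq> 0" if i: "i < n - m" for i
  proof -
    have "m + i < m + (n - m)" using i by simp
    from indep_rows_nonzero_row[OF ind[folded P_def, unfolded full_row_rank_append_rows_iff[OF lP L]] this] show ?thesis
      by simp
  qed
  have rdC: "row_deg C i = mat_deg A + 1" if "i < n - m" for i
    using Lrow[OF that] row_deg_xpow_smult[of i L] L that unfolding C_def by auto
  have "lead_mat C = L"
    by (rule eq_matI) (use C L Cij rdC in \<open>auto simp: lead_mat_def\<close>)
  then have "full_row_rank (lead_mat (P @\<^sub>r C))"
    using ind lead_mat_append_rows[OF P(1) C] unfolding P_def by simp
  moreover have "no_zero_row C" unfolding no_zero_row_iff using C Cij Lrow by fastforce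
  then have "no_zero_row (P @\<^sub>r C)"
    using no_zero_row_append_rows[OF P(1) C] P(2) unfolding is_popov_def by simp
  ultimately have "row_reduced (P @\<^sub>r C)"
    unfolding row_reduced_def using carrier_append_rows[OF P(1) C] mn by simp
  moreover have "\<forall>i<dim_row C. mat_deg P < row_deg C i" using rdC C P(3) by simp
  ultimately show ?thesis
    unfolding is_completion_def Let_def using C A unfolding P_def C_def by simp
qed

subsection \<open>Counting independent extensions\<close>

lemma exists_nonzero_solution:
  fixes R :: "nat \<Rightarrow> nat \<Rightarrow> 'a::field"
  shows "finite J \<Longrightarrow> s < card J \<Longrightarrow> \<exists>w. (\<exists>j\<in>J. w j \<noteq> 0) \<and> (\<forall>b<s. (\<Sum>j\<in>J. R b j * w j) = 0)"
proof (induction s arbitrary: J R)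
  case 0
  then obtain j0 where "j0 \<in> J" by (metis card.empty card_gt_0_iff ex_in_conv)
  then show ?case by (intro exI[of _ "\<lambda>j. 1"]) auto
next
  case (Suc s)
  show ?case
  proof (cases "\<forall>j\<in>J. R s j = 0")
    case True
    obtain w where w: "\<exists>j\<in>J. w j \<noteq> 0" "\<forall>b<s. (\<Sum>j\<in>J. R b j * w j) = 0"
      using Suc.IH[OF Suc.prems(1), of R] Suc.prems(2) by auto
    then show ?thesis using True by (intro exI[of _ w]) (auto simp: less_Suc_eq)
  next
    case False
    then obtain j1 where j1: "j1 \<in> J" "R s j1 \<noteq> 0" by blast
    define J' where "J' = J - {j1}"
    have J': "finite J'" "s < card J'" unfolding J'_def using Suc.prems j1 by auto
    \<comment> \<open>eliminate the unknown \<open>j1\<close> using equation \<open>s\<close>, solve the smaller system, then back-substitute\<close>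
    obtain w' where w': "\<exists>j\<in>J'. w' j \<noteq> 0"
      "\<forall>b<s. (\<Sum>j\<in>J'. (R b j - R b j1 * R s j / R s j1) * w' j) = 0"
      using Suc.IH[OF J', of "\<lambda>b j. R b j - R b j1 * R s j / R s j1"] by auto
    define w where "w = w'(j1 := - (\<Sum>j\<in>J'. R s j * w' j) / R s j1)"
    have split: "(\<Sum>j\<in>J. R b j * w j) = R b j1 * w j1 + (\<Sum>j\<in>J'. R b j * w' j)" for b
    proof -
      have "(\<Sum>j\<in>J'. R b j * w j) = (\<Sum>j\<in>J'. R b j * w' j)"
        by (rule sum.cong) (auto simp: w_def J'_def)
      then show ?thesis unfolding J'_def using j1 Suc.prems(1) by (simp add: sum.remove)
    qed
    have wj1: "w j1 = - (\<Sum>j\<in>J'. R s j * w' j) / R s j1" unfolding w_def by simp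
    have "(\<Sum>j\<in>J. R b j * w j) = 0" if "b < Suc s" for b
    proof (cases "b = s")
      case True
      then show ?thesis unfolding split wj1 using j1(2) by (simp add: field_simps)
    next
      case False
      then have "(\<Sum>j\<in>J'. R b j * w' j) - R b j1 / R s j1 * (\<Sum>j\<in>J'. R s j * w' j) = 0"
        using w'(2) that by (simp add: algebra_simps sum_subtractf sum_distrib_left)
      then show ?thesis unfolding split wj1 using j1(2) by (simp add: field_simps)
    qed
    moreover have "\<exists>j\<in>J. w j \<noteq> 0" using w'(1) unfolding w_def J'_def by auto
    ultimately show ?thesis by blast
  qed
qed

definition append_row :: "nat \<Rightarrow> (nat \<Rightarrow> nat \<Rightarrow> 'a) \<Rightarrow> (nat \<Rightarrow> 'a) \<Rightarrow> nat \<Rightarrow> nat \<Rightarrow> 'a" where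
  "append_row s R x = (\<lambda>b j. if b < s then R b j else x j)"

lemma dependent_append_row_in_span:
  fixes R :: "nat \<Rightarrow> nat \<Rightarrow> 'a::field"
  assumes ind: "indep_rows s n R" and dep: "\<not> indep_rows (Suc s) n (append_row s R x)"
  shows "\<exists>a. \<forall>j<n. x j = (\<Sum>b<s. R b j * a b)"
proof -
  obtain u where u: "\<forall>j<n. (\<Sum>b<Suc s. append_row s R x b j * u b) = 0" and ub: "\<exists>b<Suc s. u b \<noteq> 0"
    using dep unfolding indep_rows_def by blast
  have us: "\<forall>j<n. (\<Sum>b<s. R b j * u b) + x j * u s = 0"
    using u unfolding append_row_def by (simp add: lessThan_Suc sum.insert add.commute)
  have "u s \<noteq> 0"
  proof
    assume "u s = 0"
    then have "\<forall>b<s. u b = 0" using us ind unfolding indep_rows_def by simp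
    then show False using ub \<open>u s = 0\<close> by (auto simp: less_Suc_eq)
  qed
  have "x j = (\<Sum>b<s. R b j * (- u b / u s))" if "j < n" for j
  proof -
    have "(\<Sum>b<s. R b j * (- u b / u s)) = - (\<Sum>b<s. R b j * u b) / u s"
      by (simp add: sum_divide_distrib sum_negf)
    also have "\<dots> = x j"
    proof -
      have "(\<Sum>b<s. R b j * u b) = - (x j * u s)" using us that by (simp add: eq_neg_iff_add_eq_0)
      then show ?thesis using \<open>u s \<noteq> 0\<close> by simp
    qed
    finally show ?thesis by simp
  qed
  then show ?thesis by (intro exI[of _ "\<lambda>b. - u b / u s"]) simp
qed

definition dependent_rows :: "'a set \<Rightarrow> nat \<Rightarrow> nat \<Rightarrow> (nat \<Rightarrow> nat \<Rightarrow> 'a::field) \<Rightarrow> (nat \<Rightarrow> 'a) set" where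
  "dependent_rows S n s R = {x \<in> PiE {..<n} (\<lambda>_. S). \<not> indep_rows (Suc s) n (append_row s R x)}"

lemma finite_dependent_rows: "finite S \<Longrightarrow> finite (dependent_rows S n s R)"
  unfolding dependent_rows_def by (simp add: finite_PiE)

lemma card_hyperplane_le:
  fixes w :: "nat \<Rightarrow> 'a::field"
  assumes S: "finite S" and j0: "j0 < n" "w j0 \<noteq> 0"
  shows "card {x \<in> PiE {..<n} (\<lambda>_. S). (\<Sum>j<n. x j * w j) = 0} \<le> card S ^ (n - 1)"
proof -
  define Z where "Z = {x \<in> PiE {..<n} (\<lambda>_. S). (\<Sum>j<n. x j * w j) = 0}"
  define J where "J = {..<n} - {j0}"
  have split: "(\<Sum>j<n. f j) = f j0 + (\<Sum>j\<in>J. f j)" for f :: "nat \<Rightarrow> 'a"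
    unfolding J_def using j0 by (simp add: sum.remove)
  \<comment> \<open>a point of the hyperplane is determined by its coordinates off \<open>j0\<close>\<close>
  have "inj_on (\<lambda>x. restrict x J) Z"
  proof (rule inj_onI)
    fix x y assume x: "x \<in> Z" and y: "y \<in> Z" and e: "restrict x J = restrict y J"
    have off: "x j = y j" if "j \<in> J" for j using e that by (metis restrict_apply')
    have "x j0 * w j0 + (\<Sum>j\<in>J. x j * w j) = 0" using x split[of "\<lambda>j. x j * w j"] unfolding Z_def by simp
    moreover have "y j0 * w j0 + (\<Sum>j\<in>J. y j * w j) = 0" using y split[of "\<lambda>j. y j * w j"] unfolding Z_def by simp
    moreover have "(\<Sum>j\<in>J. x j * w j) = (\<Sum>j\<in>J. y j * w j)" using off by simp
    ultimately have "x j0 * w j0 = y j0 * w j0" by (metis add_right_cancel)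
    then have "x j0 = y j0" using j0(2) by simp
    then have "x j = y j" if "j \<in> {..<n}" for j using off that unfolding J_def by (cases "j = j0") auto
    then show "x = y" using x y unfolding Z_def by (intro PiE_ext[of x "{..<n}" "\<lambda>_. S"]) auto
  qed
  moreover have "(\<lambda>x. restrict x J) ` Z \<subseteq> PiE J (\<lambda>_. S)"
  proof
    fix y assume "y \<in> (\<lambda>x. restrict x J) ` Z"
    then obtain x where x: "x \<in> Z" "y = restrict x J" by blast
    have "\<forall>i\<in>J. x i \<in> S" using x(1) unfolding Z_def J_def by (auto dest: PiE_mem)
    then show "y \<in> PiE J (\<lambda>_. S)" using x(2) by (simp add: restrict_PiE_iff)
  qed
  ultimately have "card Z \<le> card (PiE J (\<lambda>_. S))"
    using S by (intro card_inj_on_le) (auto simp: finite_PiE J_def)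
  also have "\<dots> = card S ^ (n - 1)" using j0 unfolding J_def by (simp add: card_PiE)
  finally show ?thesis unfolding Z_def .
qed

lemma card_dependent_rows_le:
  fixes R :: "nat \<Rightarrow> nat \<Rightarrow> 'a::field"
  assumes ind: "indep_rows s n R" and sn: "s < n" and S: "finite S"
  shows "card (dependent_rows S n s R) \<le> card S ^ (n - 1)"
proof -
  \<comment> \<open>every dependent row lies in the hyperplane orthogonal to a common nonzero \<open>w\<close>\<close>
  obtain w where w: "\<exists>j\<in>{..<n}. w j \<noteq> 0" "\<forall>b<s. (\<Sum>j<n. R b j * w j) = 0"
    using exists_nonzero_solution[of "{..<n}" s R] sn by auto
  obtain j0 where j0: "j0 < n" "w j0 \<noteq> 0" using w(1) by auto
  have "dependent_rows S n s R \<subseteq> {x \<in> PiE {..<n} (\<lambda>_. S). (\<Sum>j<n. x j * w j) = 0}"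
  proof
    fix x assume x: "x \<in> dependent_rows S n s R"
    then obtain a where a: "\<forall>j<n. x j = (\<Sum>b<s. R b j * a b)"
      using dependent_append_row_in_span[OF ind] unfolding dependent_rows_def by blast
    have "(\<Sum>j<n. x j * w j) = (\<Sum>j<n. \<Sum>b<s. R b j * a b * w j)" using a by (simp add: sum_distrib_right)
    also have "\<dots> = (\<Sum>b<s. \<Sum>j<n. R b j * a b * w j)" by (rule sum.swap)
    also have "\<dots> = (\<Sum>b<s. a b * (\<Sum>j<n. R b j * w j))" by (simp add: sum_distrib_left algebra_simps)
    also have "\<dots> = 0" using w(2) by simp
    finally show "x \<in> {x \<in> PiE {..<n} (\<lambda>_. S). (\<Sum>j<n. x j * w j) = 0}" using x unfolding dependent_rows_def by simp
  qed
  then have "card (dependent_rows S n s R) \<le> card {x \<in> PiE {..<n} (\<lambda>_. S). (\<Sum>j<n. x j * w j) = 0}"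
    using S by (intro card_mono) (auto simp: finite_PiE)
  then show ?thesis using card_hyperplane_le[where w=w, OF S j0] by simp
qed

lemma card_dependent_rows_UNIV_le:
  fixes R :: "nat \<Rightarrow> nat \<Rightarrow> 'a::field"
  assumes ind: "indep_rows s n R" and fin: "finite (UNIV :: 'a set)"
  shows "card (dependent_rows (UNIV :: 'a set) n s R) \<le> card (UNIV :: 'a set) ^ s"
proof -
  \<comment> \<open>every dependent row is the image of its coefficient vector\<close>
  define g where "g a = restrict (\<lambda>j. \<Sum>b<s. R b j * a b) {..<n}" for a
  have "dependent_rows UNIV n s R \<subseteq> g ` PiE {..<s} (\<lambda>_. UNIV)"
  proof
    fix x assume x: "x \<in> dependent_rows UNIV n s R"
    then obtain a where a: "\<forall>j<n. x j = (\<Sum>b<s. R b j * a b)"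
      using dependent_append_row_in_span[OF ind] unfolding dependent_rows_def by blast
    have "x = g (restrict a {..<s})"
      by (rule PiE_ext[of x "{..<n}" "\<lambda>_. UNIV"]) (use x a in \<open>auto simp: g_def dependent_rows_def\<close>)
    then show "x \<in> g ` PiE {..<s} (\<lambda>_. UNIV)" by force
  qed
  moreover have "card (g ` PiE {..<s} (\<lambda>_. (UNIV :: 'a set))) \<le> card (UNIV :: 'a set) ^ s"
    using card_image_le[of "PiE {..<s} (\<lambda>_. (UNIV :: 'a set))" g] fin by (simp add: finite_PiE card_PiE)
  ultimately show ?thesis using fin by (meson card_mono finite_PiE finite_imageI finite_lessThan le_trans)
qed

definition stack_rows :: "nat \<Rightarrow> (nat \<Rightarrow> nat \<Rightarrow> 'a) \<Rightarrow> (nat \<times> nat \<Rightarrow> 'a) \<Rightarrow> nat \<Rightarrow> nat \<Rightarrow> 'a" where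
  "stack_rows k B f = (\<lambda>b j. if b < k then B b j else f (b - k, j))"

definition indep_extensions :: "'a set \<Rightarrow> nat \<Rightarrow> nat \<Rightarrow> (nat \<Rightarrow> nat \<Rightarrow> 'a::field) \<Rightarrow> nat \<Rightarrow> (nat \<times> nat \<Rightarrow> 'a) set" where
  "indep_extensions S n k B r = {f \<in> PiE ({..<r} \<times> {..<n}) (\<lambda>_. S). indep_rows (k + r) n (stack_rows k B f)}"

definition snoc_row :: "nat \<Rightarrow> nat \<Rightarrow> (nat \<times> nat \<Rightarrow> 'a) \<Rightarrow> (nat \<Rightarrow> 'a) \<Rightarrow> nat \<times> nat \<Rightarrow> 'a" where
  "snoc_row r n f x = (\<lambda>(i, j). if i < r \<and> j < n then f (i, j) else if i = r \<and> j < n then x j else undefined)"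

lemma snoc_row_in_PiE:
  assumes "f \<in> PiE ({..<r} \<times> {..<n}) (\<lambda>_. S)" and "x \<in> PiE {..<n} (\<lambda>_. S)"
  shows "snoc_row r n f x \<in> PiE ({..<Suc r} \<times> {..<n}) (\<lambda>_. S)"
  using assms unfolding PiE_iff extensional_def snoc_row_def by (auto simp: less_Suc_eq)

lemma inj_on_snoc_row:
  "inj_on (\<lambda>(f, x). snoc_row r n f x) (PiE ({..<r} \<times> {..<n}) (\<lambda>_. S) \<times> PiE {..<n} (\<lambda>_. S))"
proof (rule inj_onI, clarify)
  fix f x f' x'
  assume f: "f \<in> PiE ({..<r} \<times> {..<n}) (\<lambda>_. S)" "f' \<in> PiE ({..<r} \<times> {..<n}) (\<lambda>_. S)"
    and x: "x \<in> PiE {..<n} (\<lambda>_. S)" "x' \<in> PiE {..<n} (\<lambda>_. S)"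
    and e: "snoc_row r n f x = snoc_row r n f' x'"
  have "f p = f' p" if "p \<in> {..<r} \<times> {..<n}" for p
    using that fun_cong[OF e, of p] unfolding snoc_row_def by auto
  moreover have "x j = x' j" if "j \<in> {..<n}" for j
    using that fun_cong[OF e, of "(r, j)"] unfolding snoc_row_def by auto
  ultimately show "f = f' \<and> x = x'" using f x by (auto intro: PiE_ext)
qed

lemma card_indep_extensions_Suc_ge:
  fixes B :: "nat \<Rightarrow> nat \<Rightarrow> 'a::field"
  assumes S: "finite S"
  shows "(\<Sum>f\<in>indep_extensions S n k B r. card (PiE {..<n} (\<lambda>_. S) - dependent_rows S n (k + r) (stack_rows k B f)))
    \<le> card (indep_extensions S n k B (Suc r))"
proof -
  let ?G = "indep_extensions S n k B r"
  let ?X = "\<lambda>f. PiE {..<n} (\<lambda>_. S) - dependent_rows S n (k + r) (stack_rows k B f)"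
  have "(\<lambda>(f, x). snoc_row r n f x) ` Sigma ?G ?X \<subseteq> indep_extensions S n k B (Suc r)"
  proof
    fix y assume "y \<in> (\<lambda>(f, x). snoc_row r n f x) ` Sigma ?G ?X"
    then obtain f x where f: "f \<in> ?G" and x: "x \<in> ?X f" and y: "y = snoc_row r n f x" by auto
    have "indep_rows (k + Suc r) n (stack_rows k B (snoc_row r n f x))
        = indep_rows (Suc (k + r)) n (append_row (k + r) (stack_rows k B f) x)"
      by (simp, rule indep_rows_cong) (auto simp: stack_rows_def append_row_def snoc_row_def)
    moreover have "snoc_row r n f x \<in> PiE ({..<Suc r} \<times> {..<n}) (\<lambda>_. S)"
      using f x by (intro snoc_row_in_PiE) (auto simp: indep_extensions_def)
    ultimately show "y \<in> indep_extensions S n k B (Suc r)"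
      using x unfolding y indep_extensions_def dependent_rows_def by simp
  qed
  moreover have "inj_on (\<lambda>(f, x). snoc_row r n f x) (Sigma ?G ?X)"
    by (rule inj_on_subset[OF inj_on_snoc_row]) (auto simp: indep_extensions_def)
  moreover have "finite (indep_extensions S n k B (Suc r))"
    unfolding indep_extensions_def using S by (simp add: finite_PiE)
  ultimately have "card (Sigma ?G ?X) \<le> card (indep_extensions S n k B (Suc r))"
    by (intro card_inj_on_le)
  moreover have "card (Sigma ?G ?X) = (\<Sum>f\<in>?G. card (?X f))"
    using S by (intro card_SigmaI) (auto simp: indep_extensions_def finite_PiE)
  ultimately show ?thesis by simp
qed

lemma card_indep_extensions_ge:
  fixes B :: "nat \<Rightarrow> nat \<Rightarrow> 'a::field" and \<beta> :: "nat \<Rightarrow> real"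
  assumes S: "finite S" and indB: "indep_rows k n B"
    and dep: "\<And>s R. k \<le> s \<Longrightarrow> s < n \<Longrightarrow> indep_rows s n R \<Longrightarrow> real (card (dependent_rows S n s R)) \<le> \<beta> s"
    and \<beta>: "\<And>s. k \<le> s \<Longrightarrow> s < n \<Longrightarrow> \<beta> s \<le> real (card S) ^ n"
  shows "k + r \<le> n \<Longrightarrow> (\<Prod>t<r. real (card S) ^ n - \<beta> (k + t)) \<le> real (card (indep_extensions S n k B r))"
proof (induction r)
  case 0
  have "indep_rows k n (stack_rows k B f) = indep_rows k n B" for f
    by (rule indep_rows_cong) (simp add: stack_rows_def)
  then have "indep_extensions S n k B 0 = {\<lambda>_. undefined}"
    using indB unfolding indep_extensions_def by auto
  then show ?case by simp
next
  case (Suc r)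
  let ?q = "real (card S)" and ?G = "indep_extensions S n k B r"
  have good: "?q ^ n - \<beta> (k + r) \<le> real (card (PiE {..<n} (\<lambda>_. S) - dependent_rows S n (k + r) (stack_rows k B f)))"
    if "f \<in> ?G" for f
  proof -
    have "dependent_rows S n (k + r) (stack_rows k B f) \<subseteq> PiE {..<n} (\<lambda>_. S)"
      unfolding dependent_rows_def by auto
    moreover have "finite (PiE {..<n} (\<lambda>_. S))" using S by (simp add: finite_PiE)
    ultimately have "card (dependent_rows S n (k + r) (stack_rows k B f)) \<le> card S ^ n"
      using card_mono by (fastforce simp: card_PiE)
    then have "real (card (PiE {..<n} (\<lambda>_. S) - dependent_rows S n (k + r) (stack_rows k B f)))
        = ?q ^ n - real (card (dependent_rows S n (k + r) (stack_rows k B f)))"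
      using \<open>dependent_rows S n (k + r) (stack_rows k B f) \<subseteq> _\<close> finite_dependent_rows[OF S]
      by (simp add: card_Diff_subset card_PiE of_nat_diff)
    moreover have "indep_rows (k + r) n (stack_rows k B f)" using that unfolding indep_extensions_def by simp
    then have "real (card (dependent_rows S n (k + r) (stack_rows k B f))) \<le> \<beta> (k + r)"
      using dep Suc.prems by simp
    ultimately show ?thesis by simp
  qed
  have "(\<Prod>t<Suc r. ?q ^ n - \<beta> (k + t)) = (\<Prod>t<r. ?q ^ n - \<beta> (k + t)) * (?q ^ n - \<beta> (k + r))"
    by simp
  also have "\<dots> \<le> real (card ?G) * (?q ^ n - \<beta> (k + r))"
    using Suc \<beta>[of "k + r"] by (intro mult_right_mono) auto
  also have "\<dots> = (\<Sum>f\<in>?G. ?q ^ n - \<beta> (k + r))" by simp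
  also have "\<dots> \<le> (\<Sum>f\<in>?G. real (card (PiE {..<n} (\<lambda>_. S) - dependent_rows S n (k + r) (stack_rows k B f))))"
    by (rule sum_mono) (rule good)
  also have "\<dots> \<le> real (card (indep_extensions S n k B (Suc r)))"
    using card_indep_extensions_Suc_ge[OF S, where B=B and n=n and k=k and r=r] by (simp only: of_nat_sum[symmetric] of_nat_le_iff)
  finally show ?case .
qed

lemma inj_on_mat: "inj_on (\<lambda>f. mat r n f) (PiE ({..<r} \<times> {..<n}) (\<lambda>_. S))"
proof (rule inj_onI)
  fix f g assume f: "f \<in> PiE ({..<r} \<times> {..<n}) (\<lambda>_. S)" and g: "g \<in> PiE ({..<r} \<times> {..<n}) (\<lambda>_. S)"
    and e: "mat r n f = mat r n g"
  show "f = g"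
  proof (rule PiE_ext[OF f g])
    fix p assume "p \<in> {..<r} \<times> {..<n}"
    then show "f p = g p" using arg_cong[OF e, of "\<lambda>M. M $$ p"] by auto
  qed
qed

lemma mats_over_eq_image: "mats_over S r n = (\<lambda>f. mat r n f) ` PiE ({..<r} \<times> {..<n}) (\<lambda>_. S)"
proof
  show "mats_over S r n \<subseteq> (\<lambda>f. mat r n f) ` PiE ({..<r} \<times> {..<n}) (\<lambda>_. S)"
  proof
    fix L assume L: "L \<in> mats_over S r n"
    define f where "f = restrict (\<lambda>p. L $$ p) ({..<r} \<times> {..<n})"
    have "f \<in> PiE ({..<r} \<times> {..<n}) (\<lambda>_. S)" using L unfolding f_def mats_over_def by auto
    moreover have "mat r n f = L" using L unfolding f_def mats_over_def by (intro eq_matI) auto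
    ultimately show "L \<in> (\<lambda>f. mat r n f) ` PiE ({..<r} \<times> {..<n}) (\<lambda>_. S)" by blast
  qed
qed (auto simp: mats_over_def dest: PiE_mem)

lemma card_mats_over: "finite S \<Longrightarrow> card (mats_over S r n) = card S ^ (r * n)"
  unfolding mats_over_eq_image by (simp add: card_image[OF inj_on_mat] card_PiE card_cartesian_product)

lemma finite_mats_over: "finite S \<Longrightarrow> finite (mats_over S r n)"
  unfolding mats_over_eq_image by (simp add: finite_PiE)

lemma prod_diff_divide_power:
  fixes Q :: real and \<beta> :: "nat \<Rightarrow> real"
  assumes "0 < Q"
  shows "(\<Prod>t<r. Q - \<beta> t) / Q ^ r = (\<Prod>t<r. 1 - \<beta> t / Q)"
proof -
  have "(\<Prod>t<r. 1 - \<beta> t / Q) = (\<Prod>t<r. (Q - \<beta> t) / Q)"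
    using assms by (intro prod.cong) (auto simp: field_simps)
  also have "\<dots> = (\<Prod>t<r. Q - \<beta> t) / Q ^ r" by (simp add: prod_dividef)
  finally show ?thesis by simp
qed

lemma indep_extension_full_row_rank:
  fixes M :: "'a::field mat"
  assumes M: "M \<in> carrier_mat m n" and f: "f \<in> indep_extensions S n m (\<lambda>b j. M $$ (b, j)) r"
  shows "mat r n f \<in> mats_over S r n" and "full_row_rank (M @\<^sub>r mat r n f)"
proof -
  show "mat r n f \<in> mats_over S r n" using f unfolding mats_over_eq_image indep_extensions_def by blast
  have "full_row_rank (M @\<^sub>r mat r n f) \<longleftrightarrow>
      indep_rows (m + r) n (\<lambda>b j. if b < m then M $$ (b, j) else mat r n f $$ (b - m, j))"
    using full_row_rank_append_rows_iff[OF M, of "mat r n f" r] by simp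
  also have "\<dots> \<longleftrightarrow> indep_rows (m + r) n (stack_rows m (\<lambda>b j. M $$ (b, j)) f)"
    by (rule indep_rows_cong) (auto simp: stack_rows_def)
  finally show "full_row_rank (M @\<^sub>r mat r n f)" using f unfolding indep_extensions_def by simp
qed

lemma completion_fraction_ge:
  fixes A :: "'a::field poly mat" and \<beta> :: "nat \<Rightarrow> real"
  assumes A: "A \<in> carrier_mat m n" and mn: "m < n" and fr: "full_row_rank A"
    and S: "finite S" "S \<noteq> {}"
    and dep: "\<And>s R. m \<le> s \<Longrightarrow> s < n \<Longrightarrow> indep_rows s n R \<Longrightarrow> real (card (dependent_rows S n s R)) \<le> \<beta> s"
    and \<beta>: "\<And>s. m \<le> s \<Longrightarrow> s < n \<Longrightarrow> \<beta> s \<le> real (card S) ^ n"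
  shows "(\<Prod>t<n - m. 1 - \<beta> (m + t) / real (card S) ^ n)
    \<le> real (card {L \<in> mats_over S (n - m) n. is_completion A (xpow_smult (mat_deg A + 1) L)})
       / real (card (mats_over S (n - m) n))"
proof -
  define r where "r = n - m"
  define M where "M = lead_mat (popov_form A)"
  define good where "good = {L \<in> mats_over S r n. is_completion A (xpow_smult (mat_deg A + 1) L)}"
  have n: "0 < n" and mr: "m + r = n" using mn unfolding r_def by auto
  have M: "M \<in> carrier_mat m n" using popov_form_spec(1)[OF A n fr] unfolding M_def lead_mat_def by auto
  have "indep_rows m n (\<lambda>b j. M $$ (b, j))"
    using popov_lead_mat_full_row_rank[OF popov_form_spec(2)[OF A n fr]] popov_form_spec(1)[OF A n fr] M n
    unfolding full_row_rank_iff_indep_rows M_def by simp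
  note G = card_indep_extensions_ge[OF S(1) this dep \<beta>, of r]
  have "(\<lambda>f. mat r n f) ` indep_extensions S n m (\<lambda>b j. M $$ (b, j)) r \<subseteq> good"
  proof
    fix L assume "L \<in> (\<lambda>f. mat r n f) ` indep_extensions S n m (\<lambda>b j. M $$ (b, j)) r"
    then obtain f where f: "f \<in> indep_extensions S n m (\<lambda>b j. M $$ (b, j)) r" and L: "L = mat r n f" by blast
    have "L \<in> carrier_mat (n - m) n" unfolding L r_def by simp
    then show "L \<in> good"
      using indep_extension_full_row_rank[OF M f] completion_if_lead_rows_full_rank[OF A mn fr]
      unfolding good_def M_def L by simp
  qed
  moreover have "inj_on (\<lambda>f. mat r n f) (indep_extensions S n m (\<lambda>b j. M $$ (b, j)) r)"
    by (rule inj_on_subset[OF inj_on_mat]) (auto simp: indep_extensions_def)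
  moreover have "finite good" unfolding good_def using finite_mats_over[OF S(1)] by simp
  ultimately have "card (indep_extensions S n m (\<lambda>b j. M $$ (b, j)) r) \<le> card good"
    by (metis card_image card_mono)
  moreover have Q: "0 < real (card S) ^ n" using S by (simp add: card_gt_0_iff)
  ultimately have "(\<Prod>t<r. real (card S) ^ n - \<beta> (m + t)) / (real (card S) ^ n) ^ r
      \<le> real (card good) / (real (card S) ^ n) ^ r"
    using G mr by (intro divide_right_mono) auto
  then show ?thesis
    unfolding prod_diff_divide_power[OF Q] good_def r_def card_mats_over[OF S(1)]
    by (simp add: power_mult mult.commute)
qed

lemma completion_fraction_ge_general:
  fixes A :: "'a::field poly mat"
  assumes A: "A \<in> carrier_mat m n" and mn: "m < n" and fr: "full_row_rank A"
    and S: "finite S" "S \<noteq> {}"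
  shows "1 - real (n - m) / real (card S)
    \<le> real (card {L \<in> mats_over S (n - m) n. is_completion A (xpow_smult (mat_deg A + 1) L)})
       / real (card (mats_over S (n - m) n))"
proof -
  let ?q = "real (card S)"
  have q: "1 \<le> ?q" using S by (simp add: Suc_le_eq card_gt_0_iff)
  have "?q ^ (n - 1) / ?q ^ n = 1 / ?q"
    using q mn power_Suc[of ?q "n - 1"] by (simp add: Suc_diff_1)
  moreover have "1 - real (n - m) / ?q \<le> (1 - 1 / ?q) ^ (n - m)"
    using Bernoulli_inequality[of "- 1 / ?q" "n - m"] q by (simp add: field_simps)
  moreover have "(\<Prod>t<n - m. 1 - ?q ^ (n - 1) / ?q ^ n)
    \<le> real (card {L \<in> mats_over S (n - m) n. is_completion A (xpow_smult (mat_deg A + 1) L)})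
       / real (card (mats_over S (n - m) n))"
    using card_dependent_rows_le S(1) q
    by (intro completion_fraction_ge[OF A mn fr S]) (auto intro: power_increasing)
  ultimately show ?thesis by simp
qed

lemma completion_fraction_ge_finite_field:
  fixes A :: "'a::field poly mat"
  assumes A: "A \<in> carrier_mat m n" and mn: "m < n" and fr: "full_row_rank A"
    and fin: "finite (UNIV :: 'a set)"
  shows "(\<Prod>i = 1..n - m. 1 - 1 / real (card (UNIV :: 'a set)) ^ i)
    \<le> real (card {L \<in> mats_over UNIV (n - m) n. is_completion A (xpow_smult (mat_deg A + 1) L)})
       / real (card (mats_over (UNIV :: 'a set) (n - m) n))"
proof -
  let ?q = "real (card (UNIV :: 'a set))"
  have q: "1 \<le> ?q" using fin by (simp add: Suc_le_eq card_gt_0_iff)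
  have "(\<Prod>t<n - m. 1 - ?q ^ (m + t) / ?q ^ n) = (\<Prod>t<n - m. 1 - 1 / ?q ^ (n - m - t))"
  proof (rule prod.cong)
    fix t assume "t \<in> {..<n - m}"
    then have "?q ^ n = ?q ^ (m + t) * ?q ^ (n - m - t)" by (simp flip: power_add)
    then show "1 - ?q ^ (m + t) / ?q ^ n = 1 - 1 / ?q ^ (n - m - t)" using q by simp
  qed simp
  also have "\<dots> = (\<Prod>i = 1..n - m. 1 - 1 / ?q ^ i)"
    by (rule prod.reindex_bij_witness[where i = "\<lambda>i. n - m - i" and j = "\<lambda>t. n - m - t"]) auto
  moreover have "(\<Prod>t<n - m. 1 - ?q ^ (m + t) / ?q ^ n)
    \<le> real (card {L \<in> mats_over UNIV (n - m) n. is_completion A (xpow_smult (mat_deg A + 1) L)})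
       / real (card (mats_over (UNIV :: 'a set) (n - m) n))"
  proof (rule completion_fraction_ge[OF A mn fr fin UNIV_not_empty])
    show "real (card (dependent_rows UNIV n s R)) \<le> ?q ^ s" if "indep_rows s n R" for s and R :: "nat \<Rightarrow> nat \<Rightarrow> 'a"
    proof -
      have "real (card (dependent_rows UNIV n s R)) \<le> real (card (UNIV :: 'a set) ^ s)"
        using card_dependent_rows_UNIV_le[OF that fin] by (simp only: of_nat_le_iff)
      then show ?thesis by simp
    qed
    show "?q ^ s \<le> ?q ^ n" if "s < n" for s
      using that q by (intro power_increasing) auto
  qed
  ultimately show ?thesis by simp
qed

theorem lemma3p3:
  fixes A :: "'a::field poly mat" and S :: "'a set" and m n :: nat
  assumes "A \<in> carrier_mat m n" and "m < n" and "full_row_rank A"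
    and "finite S" and "S \<noteq> {}"
  defines "q \<equiv> card S"
    and "good \<equiv> {L \<in> mats_over S (n - m) n. is_completion A (xpow_smult (mat_deg A + 1) L)}"
  shows "(finite (UNIV :: 'a set) \<and> S = UNIV \<longrightarrow>
            real (card good) / real (card (mats_over S (n - m) n))
              \<ge> (\<Prod>i = 1..n - m. 1 - 1 / real q ^ i))
       \<and> real (card good) / real (card (mats_over S (n - m) n)) \<ge> 1 - real (n - m) / real q"
  using completion_fraction_ge_finite_field[OF assms(1-3)] completion_fraction_ge_general[OF assms(1-5)]
  unfolding q_def good_def by auto

end
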